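(* There is an absolute constant $c>0$ such that for all $n\ge 3$ and $\tau\ge 1$ there exist $\varepsilon>0$ and $n$ entities moving in $\mathbb{R}^1$ along piecewise-linear trajectories with vertices at common times $t_0<\dots<t_\tau$ for which every central trajectory has complexity at least $c\,\tau n^2$.
   Context: Setting: $\mathcal{X}$ is a set of $n$ entities, each moving in $\mathbb{R}^d$ along a piecewise-linear trajectory $\sigma:[t_0,t_\tau]\to\mathbb{R}^d$ with vertices at the common times $t_0<\dots<t_\tau$. A parameter $\varepsilon\ge 0$ is fixed. Two entities $\sigma,\psi$ are $\varepsilon$-connected at time $t$ if there is a sequence $\sigma=\sigma_0,\dots,\sigma_k=\psi$ of entities with $\|\sigma_j(t)\sigma_{j+1}(t)\|\le\varepsilon$ for all $j$. A trajectoid is a function $\mathcal{T}:[t_0,t_\tau]\to\mathcal{X}$ such that whenever $\mathcal{T}$ is discontinuous at time $t$, switching from $\sigma$ to $\psi$, the entities $\sigma,\psi$ are $\varepsilon$-connected at time $t$. $D(\sigma,t)=\max_{\psi\in\mathcal{X}}\|\sigma(t)\psi(t)\|$. A central trajectory is a trajectoid minimizing $\int_{t_0}^{t_\tau}D(\mathcal{T}(t),t)\,dt$. The complexity of a trajectoid is the number of pieces of the curve $t\mapsto\mathcal{T}(t)(t)$, i.e. the number of maximal time intervals on which $\mathcal{T}$ is a single entity and that entity moves linearly. *)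

theory Defs
  imports "HOL-Analysis.Analysis"
begin

text \<open>Setting: n entities indexed by 0..n-1, entity j moves in R^1 along X j.
  Common vertex times tt 0 < ... < tt tau.\<close>

definition strictly_increasing_times :: "(nat \<Rightarrow> real) \<Rightarrow> nat \<Rightarrow> bool" where
  "strictly_increasing_times tt tau \<longleftrightarrow> (\<forall>i<tau. tt i < tt (Suc i))"

definition piecewise_linear_entities ::
  "nat \<Rightarrow> (nat \<Rightarrow> real \<Rightarrow> real) \<Rightarrow> (nat \<Rightarrow> real) \<Rightarrow> nat \<Rightarrow> bool" where
  "piecewise_linear_entities n X tt tau \<longleftrightarrow>
     (\<forall>j<n. \<forall>i<tau. \<exists>a b. \<forall>s\<in>{tt i..tt (Suc i)}. X j s = a * s + b)"

definition distinct_entities ::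
  "nat \<Rightarrow> (nat \<Rightarrow> real \<Rightarrow> real) \<Rightarrow> (nat \<Rightarrow> real) \<Rightarrow> nat \<Rightarrow> bool" where
  "distinct_entities n X tt tau \<longleftrightarrow>
     (\<forall>i<n. \<forall>j<n. i \<noteq> j \<longrightarrow> (\<exists>s\<in>{tt 0..tt tau}. X i s \<noteq> X j s))"

definition eps_connected ::
  "nat \<Rightarrow> (nat \<Rightarrow> real \<Rightarrow> real) \<Rightarrow> real \<Rightarrow> real \<Rightarrow> nat \<Rightarrow> nat \<Rightarrow> bool" where
  "eps_connected n X eps t \<sigma> \<psi> \<longleftrightarrow>
     \<sigma> < n \<and> \<psi> < n \<and>
     (\<lambda>a b. a < n \<and> b < n \<and> \<bar>X a t - X b t\<bar> \<le> eps)\<^sup>*\<^sup>* \<sigma> \<psi>"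

definition Dmax :: "nat \<Rightarrow> (nat \<Rightarrow> real \<Rightarrow> real) \<Rightarrow> nat \<Rightarrow> real \<Rightarrow> real" where
  "Dmax n X \<sigma> t = Max ((\<lambda>\<psi>. \<bar>X \<sigma> t - X \<psi> t\<bar>) ` {..<n})"

definition piece_partition ::
  "real \<Rightarrow> real \<Rightarrow> (real \<Rightarrow> nat) \<Rightarrow> nat \<Rightarrow> (nat \<Rightarrow> real) \<Rightarrow> bool" where
  "piece_partition a b T m u \<longleftrightarrow>
     u 0 = a \<and> u m = b \<and> (\<forall>k<m. u k < u (Suc k)) \<and>
     (\<forall>k<m. \<exists>\<sigma>. \<forall>s\<in>{u k<..<u (Suc k)}. T s = \<sigma>)"

text \<open>Trajectoid: a map from [tt 0, tt tau] to the entities, with finitely many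
  pieces, such that whenever it switches entity at time t, the entities involved are
  eps-connected at time t (stated as: every entity taken near t is eps-connected at
  time t to the entity taken at t).\<close>
definition trajectoid ::
  "nat \<Rightarrow> (nat \<Rightarrow> real \<Rightarrow> real) \<Rightarrow> (nat \<Rightarrow> real) \<Rightarrow> nat \<Rightarrow> real \<Rightarrow> (real \<Rightarrow> nat) \<Rightarrow> bool" where
  "trajectoid n X tt tau eps T \<longleftrightarrow>
     (\<forall>s\<in>{tt 0..tt tau}. T s < n) \<and>
     (\<exists>m u. piece_partition (tt 0) (tt tau) T m u) \<and>
     (\<forall>t\<in>{tt 0..tt tau}.
        eventually (\<lambda>s. eps_connected n X eps t (T s) (T t)) (at t within {tt 0..tt tau}))"

definition traj_cost ::
  "nat \<Rightarrow> (nat \<Rightarrow> real \<Rightarrow> real) \<Rightarrow> (nat \<Rightarrow> real) \<Rightarrow> nat \<Rightarrow> (real \<Rightarrow> nat) \<Rightarrow> real" where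
  "traj_cost n X tt tau T = integral {tt 0..tt tau} (\<lambda>s. Dmax n X (T s) s)"

definition central_trajectory ::
  "nat \<Rightarrow> (nat \<Rightarrow> real \<Rightarrow> real) \<Rightarrow> (nat \<Rightarrow> real) \<Rightarrow> nat \<Rightarrow> real \<Rightarrow> (real \<Rightarrow> nat) \<Rightarrow> bool" where
  "central_trajectory n X tt tau eps T \<longleftrightarrow>
     trajectoid n X tt tau eps T \<and>
     (\<forall>T'. trajectoid n X tt tau eps T' \<longrightarrow> traj_cost n X tt tau T \<le> traj_cost n X tt tau T')"

text \<open>Complexity: number of maximal pieces on which T is a single entity moving
  linearly = least number of open pieces of a partition with that property.\<close>
definition traj_complexity ::
  "(nat \<Rightarrow> real \<Rightarrow> real) \<Rightarrow> (nat \<Rightarrow> real) \<Rightarrow> nat \<Rightarrow> (real \<Rightarrow> nat) \<Rightarrow> nat" where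
  "traj_complexity X tt tau T =
     (LEAST m. \<exists>u. piece_partition (tt 0) (tt tau) T m u \<and>
        (\<forall>k<m. \<exists>a b. \<forall>s\<in>{u k<..<u (Suc k)}. X (T s) s = a * s + b))"

end

theory Submission
  imports Defs
begin

text \<open>If \<open>\<epsilon>\<close> exceeds the diameter of the configuration, every piecewise constant choice of
  entities is a trajectoid. On each time interval, whether one entity is at least as central
  as another is decided by the signs of finitely many affine functions, so choosing a most
  central entity at every time yields a trajectoid with finitely many pieces and minimal cost.
  Conversely, near a time at which one entity is strictly more central than all others, a
  central trajectory must use that entity, since switching to it on a short interval would
  lower the cost. Hence if the unique center changes \<open>Q\<close> times along increasing test times,
  every central trajectory has at least \<open>Q\<close> pieces.

  For \<open>n = 2k + 1 + M\<close> entities, \<open>k \<approx> n/4\<close>, take \<open>k + 1\<close> tangents of an upward parabola,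
  \<open>k\<close> tangents of a downward parabola and \<open>M\<close> constant entities between them. While the
  common parameter zigzags over \<open>[0, k]\<close> in each time step, the midpoint of the two
  envelopes sweeps \<open>2k\<close> times over the \<open>M\<close> constant levels, so the unique center changes
  \<open>2k (M - 1) = \<Omega>(n\<^sup>2)\<close> times per time step. Three or four entities are handled by a
  direct construction whose center changes once per time step.\<close>

lemma increasing_upto_less:
  fixes u :: "nat \<Rightarrow> 'a::order"
  assumes "\<forall>k<m. u k < u (Suc k)" "i < j" "j \<le> m"
  shows "u i < u j"
  by (rule lift_Suc_mono_less_ivl[of "{..<m}"]) (use assms in auto)

lemma increasing_upto_le:
  fixes u :: "nat \<Rightarrow> 'a::order"
  assumes "\<forall>k<m. u k < u (Suc k)" "i \<le> j" "j \<le> m"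
  shows "u i \<le> u j"
  using increasing_upto_less[OF assms(1), of i j] assms(2,3) by (cases "i = j") auto

lemma increasing_upto_less_iff:
  fixes u :: "nat \<Rightarrow> 'a::linorder"
  assumes "\<forall>k<m. u k < u (Suc k)" "i \<le> m" "j \<le> m"
  shows "u i < u j \<longleftrightarrow> i < j"
  using increasing_upto_less[OF assms(1), of i j] increasing_upto_less[OF assms(1), of j i] assms(2,3)
  by (metis less_asym linorder_neqE_nat)

lemma increasing_upto_cell:
  fixes u :: "nat \<Rightarrow> 'a::linorder"
  assumes "\<forall>k<m. u k < u (Suc k)" "u 0 \<le> x" "x \<le> u m" "x \<notin> u ` {..m}"
  shows "\<exists>k<m. u k < x \<and> x < u (Suc k)"
  using assms
proof (induction m)
  case 0
  then show ?case by auto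
next
  case (Suc m)
  show ?case
  proof (cases "x \<le> u m")
    case True
    have "\<forall>k<m. u k < u (Suc k)" "x \<notin> u ` {..m}"
      using Suc.prems by auto
    then obtain k where "k < m" "u k < x" "x < u (Suc k)"
      using Suc.IH Suc.prems(2) True by auto
    then show ?thesis
      using less_SucI by blast
  next
    case False
    then show ?thesis
      using Suc.prems by (intro exI[of _ m]) auto
  qed
qed

lemma increasing_upto_interval_in_cell:
  fixes u :: "nat \<Rightarrow> 'a::dense_linorder"
  assumes inc: "\<forall>k<m. u k < u (Suc k)" and "a < b" "u 0 \<le> a" "b \<le> u m"
    and avoid: "{a<..<b} \<inter> u ` {..m} = {}"
  shows "\<exists>k<m. u k \<le> a \<and> b \<le> u (Suc k)"
proof -
  obtain z where z: "a < z" "z < b"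
    using \<open>a < b\<close> dense by blast
  then have "z \<notin> u ` {..m}"
    using avoid by auto
  moreover have "u 0 \<le> z" "z \<le> u m"
    using assms(3,4) z by (meson le_less_trans less_le_trans less_imp_le)+
  ultimately obtain k where k: "k < m" "u k < z" "z < u (Suc k)"
    using increasing_upto_cell[OF inc, of z] by blast
  have "u k \<notin> {a<..<b}" "u (Suc k) \<notin> {a<..<b}"
    using avoid k(1) by auto
  then show ?thesis
    using k z by (auto simp: not_less intro!: exI[of _ k])
qed

lemma finite_increasing_enumeration:
  fixes A :: "'a::linorder set"
  assumes "finite A" "A \<noteq> {}"
  obtains m u where "\<forall>k<m. u k < u (Suc k)" "u ` {..m} = A"
proof -
  define L where "L = sorted_list_of_set A"
  have L: "set L = A" "sorted_wrt (<) L"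
    using assms(1) by (auto simp: L_def)
  then have "length L \<noteq> 0"
    using assms(2) by auto
  then have m: "Suc (length L - 1) = length L"
    by simp
  have "\<forall>k<length L - 1. L ! k < L ! Suc k"
    using sorted_wrt_nth_less[OF L(2)] m by auto
  moreover have "(!) L ` {..length L - 1} = A"
  proof -
    have "{..length L - 1} = {0..<length L}"
      using m by auto
    then show ?thesis
      using nth_image[of "length L" L] L(1) by simp
  qed
  ultimately show ?thesis
    by (rule that)
qed

lemma partition_avoiding_finite:
  fixes lo hi :: "'a::linorder"
  assumes "lo < hi" "finite S"
    and P: "\<And>a b. lo \<le> a \<Longrightarrow> a < b \<Longrightarrow> b \<le> hi \<Longrightarrow> {a<..<b} \<inter> S = {} \<Longrightarrow> P a b"
  shows "\<exists>m u. u 0 = lo \<and> u m = hi \<and> (\<forall>k<m. u k < u (Suc k)) \<and> (\<forall>k<m. P (u k) (u (Suc k)))"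
proof -
  define A where "A = insert lo (insert hi (S \<inter> {lo..hi}))"
  have A: "finite A" "A \<subseteq> {lo..hi}" "lo \<in> A" "hi \<in> A"
    using assms(1,2) by (auto simp: A_def less_imp_le)
  then obtain m u where inc: "\<forall>k<m. u k < u (Suc k)" and u: "u ` {..m} = A"
    using finite_increasing_enumeration[of A] by blast
  have bounds: "lo \<le> u j \<and> u j \<le> hi" if "j \<le> m" for j
    using that u A(2) by auto
  obtain i j where "i \<le> m" "u i = lo" "j \<le> m" "u j = hi"
    using u A(3,4) by (metis atMost_iff imageE)
  then have "u 0 \<le> lo" "hi \<le> u m"
    using increasing_upto_le[OF inc, of 0 i] increasing_upto_le[OF inc, of j m] by auto
  then have ends: "u 0 = lo" "u m = hi"
    using bounds[of 0] bounds[of m] by (simp_all add: order.antisym)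
  have avoid: "{u k<..<u (Suc k)} \<inter> S = {}" if k: "k < m" for k
  proof (rule ccontr)
    assume "{u k<..<u (Suc k)} \<inter> S \<noteq> {}"
    then obtain z where z: "u k < z" "z < u (Suc k)" "z \<in> S"
      by auto
    have "lo \<le> u k" "u (Suc k) \<le> hi"
      using bounds[of k] bounds[of "Suc k"] k by auto
    then have "lo < z" "z < hi"
      using z order.strict_trans1 order.strict_trans2 by blast+
    then have "z \<in> u ` {..m}"
      using z(3) u by (simp add: A_def less_imp_le)
    then obtain j where "j \<le> m" "u j = z"
      by auto
    then show False
      using increasing_upto_less_iff[OF inc, of k j] increasing_upto_less_iff[OF inc, of j "Suc k"] z k
      by auto
  qed
  have "P (u k) (u (Suc k))" if k: "k < m" for k
  proof (rule P[OF _ _ _ avoid[OF k]])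
    show "lo \<le> u k" "u (Suc k) \<le> hi"
      using bounds[of k] bounds[of "Suc k"] k by auto
  qed (use inc k in auto)
  then show ?thesis
    using ends inc by blast
qed

definition affine_on :: "real set \<Rightarrow> (real \<Rightarrow> real) \<Rightarrow> bool" where
  "affine_on S f \<longleftrightarrow> (\<exists>a b. \<forall>s\<in>S. f s = a * s + b)"

lemma affine_on_add:
  assumes "affine_on S f" "affine_on S g"
  shows "affine_on S (\<lambda>s. f s + g s)"
proof -
  obtain a b c d where "\<forall>s\<in>S. f s = a * s + b" "\<forall>s\<in>S. g s = c * s + d"
    using assms by (auto simp: affine_on_def)
  then show ?thesis
    unfolding affine_on_def by (intro exI[of _ "a + c"] exI[of _ "b + d"]) (simp add: algebra_simps)
qed

lemma affine_on_diff:
  assumes "affine_on S f" "affine_on S g"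
  shows "affine_on S (\<lambda>s. f s - g s)"
proof -
  obtain a b c d where "\<forall>s\<in>S. f s = a * s + b" "\<forall>s\<in>S. g s = c * s + d"
    using assms by (auto simp: affine_on_def)
  then show ?thesis
    unfolding affine_on_def by (intro exI[of _ "a - c"] exI[of _ "b - d"]) (simp add: algebra_simps)
qed

lemma continuous_on_affine_on:
  assumes "affine_on S f"
  shows "continuous_on S f"
proof -
  obtain a b where f: "\<forall>s\<in>S. f s = a * s + b"
    using assms by (auto simp: affine_on_def)
  have "continuous_on S (\<lambda>s. a * s + b)"
    by (intro continuous_intros)
  then show ?thesis
    using continuous_on_eq[of S _ f] f by auto
qed

lemma piecewise_linear_entities_iff:
  "piecewise_linear_entities n X tt tau \<longleftrightarrow> (\<forall>j<n. \<forall>i<tau. affine_on {tt i..tt (Suc i)} (X j))"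
  by (simp add: piecewise_linear_entities_def affine_on_def)

lemma continuous_on_piecewise_linear_entity:
  assumes inc: "strictly_increasing_times tt tau"
    and pl: "piecewise_linear_entities n X tt tau" and "j < n"
  shows "continuous_on {tt 0..tt tau} (X j)"
proof -
  have "continuous_on {tt 0..tt i} (X j)" if "i \<le> tau" for i
    using that
  proof (induction i)
    case 0
    then show ?case by simp
  next
    case (Suc i)
    have "tt 0 \<le> tt i" "tt i \<le> tt (Suc i)"
      using inc Suc.prems increasing_upto_le[of tau tt 0 i]
      by (auto simp: strictly_increasing_times_def less_imp_le)
    then have split: "{tt 0..tt (Suc i)} = {tt 0..tt i} \<union> {tt i..tt (Suc i)}"
      by auto
    have "continuous_on {tt i..tt (Suc i)} (X j)"
      using pl \<open>j < n\<close> Suc.prems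
      by (intro continuous_on_affine_on) (simp add: piecewise_linear_entities_iff)
    then show ?case
      unfolding split using Suc by (intro continuous_on_closed_Un) auto
  qed
  then show ?thesis by simp
qed

lemma continuous_on_Max_image:
  fixes f :: "'i \<Rightarrow> 'a::topological_space \<Rightarrow> 'b::linorder_topology"
  assumes "finite I" "I \<noteq> {}" "\<And>i. i \<in> I \<Longrightarrow> continuous_on S (f i)"
  shows "continuous_on S (\<lambda>s. Max ((\<lambda>i. f i s) ` I))"
  using assms
proof (induction I rule: finite_ne_induct)
  case (singleton i)
  then show ?case by simp
next
  case (insert i I)
  then have "(\<lambda>s. Max ((\<lambda>i. f i s) ` insert i I)) = (\<lambda>s. max (f i s) (Max ((\<lambda>i. f i s) ` I)))"
    by simp
  then show ?case
    using insert by (simp add: continuous_on_max)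
qed

lemma continuous_on_Dmax:
  assumes "\<And>j. j < n \<Longrightarrow> continuous_on S (X j)" "\<sigma> < n"
  shows "continuous_on S (Dmax n X \<sigma>)"
  unfolding Dmax_def
  by (rule continuous_on_Max_image) (use assms in \<open>auto intro!: continuous_on_rabs continuous_on_diff\<close>)

lemma Max_le_Max_iff:
  fixes A B :: "'a::linorder set"
  assumes "finite A" "A \<noteq> {}" "finite B" "B \<noteq> {}"
  shows "Max A \<le> Max B \<longleftrightarrow> (\<forall>a\<in>A. \<exists>b\<in>B. a \<le> b)"
proof
  assume "Max A \<le> Max B"
  then show "\<forall>a\<in>A. \<exists>b\<in>B. a \<le> b"
    using assms Max_in[of B] by (meson Max_ge order_trans)
next
  assume "\<forall>a\<in>A. \<exists>b\<in>B. a \<le> b"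
  then obtain b where "b \<in> B" "Max A \<le> b"
    using assms Max_in[of A] by blast
  then show "Max A \<le> Max B"
    using assms by (meson Max_ge order_trans)
qed

lemma Dmax_le_Dmax_iff:
  assumes "n > 0"
  shows "Dmax n X \<sigma> s \<le> Dmax n X \<psi> s \<longleftrightarrow>
    (\<forall>\<rho><n. \<exists>\<rho>'<n. \<bar>X \<sigma> s - X \<rho> s\<bar> \<le> \<bar>X \<psi> s - X \<rho>' s\<bar>)"
  using assms unfolding Dmax_def by (subst Max_le_Max_iff) auto

lemma abs_diff_le_abs_diff_iff:
  fixes a b c d :: real
  shows "\<bar>a - b\<bar> \<le> \<bar>c - d\<bar> \<longleftrightarrow> (a + d - b - c) * (a + c - b - d) \<le> 0"
proof -
  have "\<bar>a - b\<bar> \<le> \<bar>c - d\<bar> \<longleftrightarrow> (a - b)^2 \<le> (c - d)^2"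
    by (rule abs_le_square_iff)
  also have "\<dots> \<longleftrightarrow> (a + d - b - c) * (a + c - b - d) \<le> 0"
    by (simp add: power2_eq_square algebra_simps)
  finally show ?thesis .
qed

lemma Dmax_le_Dmax_sgn_invariant:
  assumes "n > 0" "\<sigma> < n" "\<psi> < n"
    and sgn: "\<And>i j k l. i < n \<Longrightarrow> j < n \<Longrightarrow> k < n \<Longrightarrow> l < n \<Longrightarrow>
      sgn (X i s + X j s - X k s - X l s) = sgn (X i s' + X j s' - X k s' - X l s')"
  shows "Dmax n X \<sigma> s \<le> Dmax n X \<psi> s \<longleftrightarrow> Dmax n X \<sigma> s' \<le> Dmax n X \<psi> s'"
proof -
  have "\<bar>X \<sigma> s - X \<rho> s\<bar> \<le> \<bar>X \<psi> s - X \<rho>' s\<bar> \<longleftrightarrow> \<bar>X \<sigma> s' - X \<rho> s'\<bar> \<le> \<bar>X \<psi> s' - X \<rho>' s'\<bar>"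
    if "\<rho> < n" "\<rho>' < n" for \<rho> \<rho>'
  proof -
    have "\<bar>X \<sigma> t - X \<rho> t\<bar> \<le> \<bar>X \<psi> t - X \<rho>' t\<bar> \<longleftrightarrow>
        sgn (X \<sigma> t + X \<rho>' t - X \<rho> t - X \<psi> t) * sgn (X \<sigma> t + X \<psi> t - X \<rho> t - X \<rho>' t) \<le> 0" for t
      by (simp add: abs_diff_le_abs_diff_iff flip: sgn_mult)
    then show ?thesis
      using sgn[OF assms(2) that(2) that(1) assms(3)] sgn[OF assms(2,3) that] by simp
  qed
  then show ?thesis
    unfolding Dmax_le_Dmax_iff[OF assms(1)] by blast
qed

definition pointwise_center :: "nat \<Rightarrow> (nat \<Rightarrow> real \<Rightarrow> real) \<Rightarrow> real \<Rightarrow> nat" where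
  "pointwise_center n X s = (LEAST \<sigma>. \<sigma> < n \<and> (\<forall>\<psi><n. Dmax n X \<sigma> s \<le> Dmax n X \<psi> s))"

lemma pointwise_center_minimal:
  assumes "n > 0"
  shows "pointwise_center n X s < n \<and> (\<forall>\<psi><n. Dmax n X (pointwise_center n X s) s \<le> Dmax n X \<psi> s)"
proof -
  obtain \<sigma> where "is_arg_min (\<lambda>\<sigma>. Dmax n X \<sigma> s) (\<lambda>\<sigma>. \<sigma> \<in> {..<n}) \<sigma>"
    using ex_is_arg_min_if_finite[of "{..<n}"] assms by blast
  then have "\<sigma> < n \<and> (\<forall>\<psi><n. Dmax n X \<sigma> s \<le> Dmax n X \<psi> s)"
    unfolding is_arg_min_def by (metis lessThan_iff not_less)
  then show ?thesis
    unfolding pointwise_center_def by (rule LeastI)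
qed

lemma pointwise_center_eq:
  assumes "\<And>\<sigma> \<psi>. \<sigma> < n \<Longrightarrow> \<psi> < n \<Longrightarrow>
    Dmax n X \<sigma> s \<le> Dmax n X \<psi> s \<longleftrightarrow> Dmax n X \<sigma> s' \<le> Dmax n X \<psi> s'"
  shows "pointwise_center n X s = pointwise_center n X s'"
  unfolding pointwise_center_def by (rule arg_cong[where f = Least]) (use assms in auto)

definition proper_zeros :: "real set \<Rightarrow> (real \<Rightarrow> real) \<Rightarrow> real set" where
  "proper_zeros S f = (if \<forall>s\<in>S. f s = 0 then {} else {s\<in>S. f s = 0})"

lemma finite_proper_zeros:
  assumes "affine_on S f"
  shows "finite (proper_zeros S f)"
proof -
  obtain a b where f: "\<forall>s\<in>S. f s = a * s + b"
    using assms by (auto simp: affine_on_def)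
  have "proper_zeros S f \<subseteq> {- b / a}"
  proof
    fix s
    assume "s \<in> proper_zeros S f"
    then have s: "s \<in> S" "a * s + b = 0" and "\<exists>x\<in>S. f x \<noteq> 0"
      using f by (auto simp: proper_zeros_def split: if_splits)
    then have "a \<noteq> 0"
      using f by auto
    then show "s \<in> {- b / a}"
      using s(2) by (simp add: field_simps)
  qed
  then show ?thesis
    using finite_subset by blast
qed

lemma sgn_eq_avoiding_proper_zeros:
  assumes "affine_on S f" "{p<..<q} \<subseteq> S" "{p<..<q} \<inter> proper_zeros S f = {}"
    and "s \<in> {p<..<q}" "s' \<in> {p<..<q}"
  shows "sgn (f s) = sgn (f s')"
proof (cases "\<forall>x\<in>S. f x = 0")
  case True
  moreover have "s \<in> S" "s' \<in> S"
    using assms(2,4,5) by auto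
  ultimately show ?thesis
    by simp
next
  case False
  then have "proper_zeros S f = {s\<in>S. f s = 0}"
    unfolding proper_zeros_def by (rule if_not_P)
  then have nonzero: "f x \<noteq> 0" if "x \<in> {p<..<q}" for x
    using assms(2,3) that by blast
  have segment: "closed_segment s s' \<subseteq> {p<..<q}"
    using assms(4,5) by (simp add: closed_segment_eq_real_ivl subset_eq)
  show ?thesis
  proof (rule ccontr)
    assume "sgn (f s) \<noteq> sgn (f s')"
    then have "f s < 0 \<and> 0 < f s' \<or> f s' < 0 \<and> 0 < f s"
      using nonzero[OF assms(4)] nonzero[OF assms(5)]
      by (cases "f s < 0"; cases "f s' < 0") (auto simp: sgn_if)
    then have "0 \<in> closed_segment (f s) (f s')"
      by (auto simp: closed_segment_eq_real_ivl)
    moreover have "continuous_on (closed_segment s s') f"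
      using continuous_on_subset[OF continuous_on_affine_on[OF assms(1)]] segment assms(2) by blast
    ultimately obtain x where "x \<in> closed_segment s s'" "f x = 0"
      using IVT'_closed_segment_real by blast
    then show False
      using nonzero segment by blast
  qed
qed

section \<open>Existence of central trajectories\<close>

definition pairwise_eps_close :: "nat \<Rightarrow> (nat \<Rightarrow> real \<Rightarrow> real) \<Rightarrow> real \<Rightarrow> real set \<Rightarrow> bool" where
  "pairwise_eps_close n X eps I \<longleftrightarrow> (\<forall>a<n. \<forall>b<n. \<forall>t\<in>I. \<bar>X a t - X b t\<bar> \<le> eps)"

lemma trajectoid_iff_pairwise_eps_close:
  assumes "pairwise_eps_close n X eps {tt 0..tt tau}"
  shows "trajectoid n X tt tau eps T \<longleftrightarrow>
    (\<forall>s\<in>{tt 0..tt tau}. T s < n) \<and> (\<exists>m u. piece_partition (tt 0) (tt tau) T m u)"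
proof -
  have "eventually (\<lambda>s. eps_connected n X eps t (T s) (T t)) (at t within {tt 0..tt tau})"
    if vals: "\<forall>s\<in>{tt 0..tt tau}. T s < n" and t: "t \<in> {tt 0..tt tau}" for t
  proof -
    have "eventually (\<lambda>s. s \<in> {tt 0..tt tau}) (at t within {tt 0..tt tau})"
      by (simp add: eventually_at_filter)
    then show ?thesis
    proof (rule eventually_mono)
      fix s
      assume "s \<in> {tt 0..tt tau}"
      then have "T s < n" "T t < n"
        using vals t by auto
      moreover have "\<bar>X (T s) t - X (T t) t\<bar> \<le> eps"
        using assms \<open>T s < n\<close> \<open>T t < n\<close> t unfolding pairwise_eps_close_def by blast
      ultimately show "eps_connected n X eps t (T s) (T t)"
        unfolding eps_connected_def by (simp add: r_into_rtranclp)
    qed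
  qed
  then show ?thesis
    unfolding trajectoid_def by blast
qed

lemma piece_partition_integrable:
  fixes f :: "nat \<Rightarrow> real \<Rightarrow> real"
  assumes cont: "\<And>\<sigma>. \<sigma> < n \<Longrightarrow> continuous_on {lo..hi} (f \<sigma>)"
    and vals: "\<forall>s\<in>{lo..hi}. T s < n" and pp: "piece_partition lo hi T m u"
  shows "(\<lambda>s. f (T s) s) integrable_on {lo..hi}"
proof -
  have inc: "\<forall>k<m. u k < u (Suc k)" and ends: "u 0 = lo" "u m = hi"
    and const: "\<forall>k<m. \<exists>\<sigma>. \<forall>s\<in>{u k<..<u (Suc k)}. T s = \<sigma>"
    using pp by (auto simp: piece_partition_def)
  have "(\<lambda>s. f (T s) s) integrable_on {u 0..u k}" if "k \<le> m" for k
    using that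
  proof (induction k)
    case 0
    then show ?case
      using integrable_on_refl[of _ "u 0"] by simp
  next
    case (Suc k)
    obtain \<sigma> where \<sigma>: "\<forall>s\<in>{u k<..<u (Suc k)}. T s = \<sigma>"
      using const Suc.prems Suc_le_lessD by blast
    have step: "u k < u (Suc k)" and "u 0 \<le> u k"
      using inc Suc.prems increasing_upto_le[OF inc, of 0 k] by auto
    have sub: "{u k..u (Suc k)} \<subseteq> {lo..hi}"
      using increasing_upto_le[OF inc, of 0 k] increasing_upto_le[OF inc, of "Suc k" m] Suc.prems ends
      by auto
    define z where "z = (u k + u (Suc k)) / 2"
    have "z \<in> {u k<..<u (Suc k)}"
      using step by (auto simp: z_def)
    then have "T z = \<sigma>" "z \<in> {lo..hi}"
      using \<sigma> sub by auto
    then have "\<sigma> < n"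
      using vals by auto
    then have "f \<sigma> integrable_on {u k..u (Suc k)}"
      using continuous_on_subset[OF cont sub] by (intro integrable_continuous_real)
    have "(\<lambda>s. f (T s) s) integrable_on {u k..u (Suc k)}"
      by (rule integrable_spike_finite[of "{u k, u (Suc k)}" _ _ "f \<sigma>"])
        (use \<open>f \<sigma> integrable_on _\<close> \<sigma> in auto)
    moreover have "(\<lambda>s. f (T s) s) integrable_on {u 0..u k}"
      using Suc by simp
    ultimately show ?case
      using Henstock_Kurzweil_Integration.integrable_combine[OF \<open>u 0 \<le> u k\<close> less_imp_le[OF step]]
      by blast
  qed
  from this[of m] show ?thesis
    using ends by simp
qed

lemma pointwise_center_constant:
  assumes n: "n > 0" and "p < q" and sub: "{p<..<q} \<subseteq> S"
    and affine: "\<And>i j k l. i < n \<Longrightarrow> j < n \<Longrightarrow> k < n \<Longrightarrow> l < n \<Longrightarrow>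
      affine_on S (\<lambda>s. X i s + X j s - X k s - X l s)"
    and avoid: "\<And>i j k l. i < n \<Longrightarrow> j < n \<Longrightarrow> k < n \<Longrightarrow> l < n \<Longrightarrow>
      {p<..<q} \<inter> proper_zeros S (\<lambda>s. X i s + X j s - X k s - X l s) = {}"
  shows "\<exists>\<sigma>. \<forall>s\<in>{p<..<q}. pointwise_center n X s = \<sigma>"
proof -
  define z where "z = (p + q) / 2"
  have z: "z \<in> {p<..<q}"
    using \<open>p < q\<close> by (auto simp: z_def)
  have "pointwise_center n X s = pointwise_center n X z" if s: "s \<in> {p<..<q}" for s
  proof -
    have "sgn (X i s + X j s - X k s - X l s) = sgn (X i z + X j z - X k z - X l z)"
      if "i < n" "j < n" "k < n" "l < n" for i j k l
      using sgn_eq_avoiding_proper_zeros[OF affine[OF that] sub avoid[OF that] s z] .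
    then show ?thesis
      by (intro pointwise_center_eq Dmax_le_Dmax_sgn_invariant[OF n]) auto
  qed
  then show ?thesis
    by blast
qed

lemma pointwise_center_piece_partition:
  assumes inc: "strictly_increasing_times tt tau" and pl: "piecewise_linear_entities n X tt tau"
    and n: "n > 0" and tau: "tau > 0"
  shows "\<exists>m u. piece_partition (tt 0) (tt tau) (pointwise_center n X) m u"
proof -
  have inc': "\<forall>c<tau. tt c < tt (Suc c)"
    using inc by (simp add: strictly_increasing_times_def)
  define comb where "comb = (\<lambda>i j k l s. X i s + X j s - X k s - X l s)"
  have affine: "affine_on {tt c..tt (Suc c)} (comb i j k l)"
    if "c < tau" "i < n" "j < n" "k < n" "l < n" for c i j k l
  proof -
    have X: "affine_on {tt c..tt (Suc c)} (X j)" if "j < n" for j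
      using pl that \<open>c < tau\<close> by (simp add: piecewise_linear_entities_iff)
    show ?thesis
      unfolding comb_def by (intro affine_on_diff affine_on_add X) (use that in auto)
  qed
  define E where "E = tt ` {..tau} \<union>
    (\<Union>c<tau. \<Union>i<n. \<Union>j<n. \<Union>k<n. \<Union>l<n. proper_zeros {tt c..tt (Suc c)} (comb i j k l))"
  have "finite E"
    unfolding E_def by (simp add: finite_proper_zeros affine)
  have const: "\<exists>\<sigma>. \<forall>s\<in>{p<..<q}. pointwise_center n X s = \<sigma>"
    if pq: "tt 0 \<le> p" "p < q" "q \<le> tt tau" "{p<..<q} \<inter> E = {}" for p q
  proof -
    obtain c where c: "c < tau" "tt c \<le> p" "q \<le> tt (Suc c)"
      using increasing_upto_interval_in_cell[OF inc' pq(2,1,3)] pq(4) by (auto simp: E_def)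
    have in_E: "proper_zeros {tt c..tt (Suc c)} (comb i j k l) \<subseteq> E"
      if "i < n" "j < n" "k < n" "l < n" for i j k l
      unfolding E_def using c(1) that by blast
    show ?thesis
    proof (rule pointwise_center_constant[OF n pq(2), where S = "{tt c..tt (Suc c)}"])
      show "{p<..<q} \<subseteq> {tt c..tt (Suc c)}"
        using c by auto
      show "affine_on {tt c..tt (Suc c)} (\<lambda>s. X i s + X j s - X k s - X l s)"
        if "i < n" "j < n" "k < n" "l < n" for i j k l
        using affine[OF c(1) that] unfolding comb_def .
      show "{p<..<q} \<inter> proper_zeros {tt c..tt (Suc c)} (\<lambda>s. X i s + X j s - X k s - X l s) = {}"
        if "i < n" "j < n" "k < n" "l < n" for i j k l
        using in_E[OF that] pq(4) unfolding comb_def by blast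
    qed
  qed
  have "tt 0 < tt tau"
    using increasing_upto_less[OF inc', of 0 tau] tau by auto
  then have "\<exists>m u. u 0 = tt 0 \<and> u m = tt tau \<and> (\<forall>k<m. u k < u (Suc k)) \<and>
      (\<forall>k<m. \<exists>\<sigma>. \<forall>s\<in>{u k<..<u (Suc k)}. pointwise_center n X s = \<sigma>)"
    by (rule partition_avoiding_finite[OF _ \<open>finite E\<close>]) (rule const)
  then show ?thesis
    unfolding piece_partition_def .
qed

lemma central_trajectory_pointwise_center:
  assumes inc: "strictly_increasing_times tt tau" and pl: "piecewise_linear_entities n X tt tau"
    and close: "pairwise_eps_close n X eps {tt 0..tt tau}" and n: "n > 0" and tau: "tau > 0"
  shows "central_trajectory n X tt tau eps (pointwise_center n X)"
proof -
  have cont: "continuous_on {tt 0..tt tau} (Dmax n X \<sigma>)" if "\<sigma> < n" for \<sigma>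
    by (rule continuous_on_Dmax[OF continuous_on_piecewise_linear_entity[OF inc pl] that])
  obtain m u where pp: "piece_partition (tt 0) (tt tau) (pointwise_center n X) m u"
    using pointwise_center_piece_partition[OF inc pl n tau] by blast
  have vals: "\<forall>s\<in>{tt 0..tt tau}. pointwise_center n X s < n"
    using pointwise_center_minimal[OF n] by blast
  have "traj_cost n X tt tau (pointwise_center n X) \<le> traj_cost n X tt tau T"
    if T: "trajectoid n X tt tau eps T" for T
  proof -
    obtain m' u' where pp': "piece_partition (tt 0) (tt tau) T m' u'"
      and vals': "\<forall>s\<in>{tt 0..tt tau}. T s < n"
      using T unfolding trajectoid_iff_pairwise_eps_close[OF close] by blast
    show ?thesis
      unfolding traj_cost_def
    proof (rule integral_le)
      show "(\<lambda>s. Dmax n X (pointwise_center n X s) s) integrable_on {tt 0..tt tau}"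
        by (rule piece_partition_integrable[OF cont vals pp])
      show "(\<lambda>s. Dmax n X (T s) s) integrable_on {tt 0..tt tau}"
        by (rule piece_partition_integrable[OF cont vals' pp'])
      show "Dmax n X (pointwise_center n X s) s \<le> Dmax n X (T s) s" if "s \<in> {tt 0..tt tau}" for s
        using pointwise_center_minimal[OF n] vals' that by blast
    qed
  qed
  moreover have "trajectoid n X tt tau eps (pointwise_center n X)"
    unfolding trajectoid_iff_pairwise_eps_close[OF close] using vals pp by blast
  ultimately show ?thesis
    by (simp add: central_trajectory_def)
qed

section \<open>Central trajectories follow strict centers\<close>

definition strict_center :: "nat \<Rightarrow> (nat \<Rightarrow> real \<Rightarrow> real) \<Rightarrow> nat \<Rightarrow> real \<Rightarrow> bool" where
  "strict_center n X \<sigma> t \<longleftrightarrow> \<sigma> < n \<and> (\<forall>\<psi><n. \<psi> \<noteq> \<sigma> \<longrightarrow> Dmax n X \<sigma> t < Dmax n X \<psi> t)"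

lemma strict_center_nearby:
  assumes cont: "\<And>j. j < n \<Longrightarrow> continuous_on {lo..hi} (X j)"
    and t0: "t0 \<in> {lo<..<hi}" and \<sigma>: "strict_center n X \<sigma> t0"
  shows "\<exists>\<delta>>0. \<forall>s. \<bar>s - t0\<bar> \<le> \<delta> \<longrightarrow> s \<in> {lo<..<hi} \<and> strict_center n X \<sigma> s"
proof -
  have "eventually (\<lambda>s. Dmax n X \<sigma> s < Dmax n X \<psi> s) (nhds t0)" if \<psi>: "\<psi> \<in> {..<n} - {\<sigma>}" for \<psi>
  proof -
    define g where "g s = Dmax n X \<psi> s - Dmax n X \<sigma> s" for s
    have "continuous_on {lo..hi} g"
      unfolding g_def using cont \<psi> \<sigma>
      by (intro continuous_on_diff continuous_on_Dmax) (auto simp: strict_center_def)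
    then have "isCont g t0"
      using continuous_on_interior t0 by fastforce
    then have "(g \<longlongrightarrow> g t0) (nhds t0)"
      by (simp add: isCont_def tendsto_at_iff_tendsto_nhds)
    moreover have "0 < g t0"
      using \<sigma> \<psi> by (auto simp: strict_center_def g_def)
    ultimately have "eventually (\<lambda>s. 0 < g s) (nhds t0)"
      by (rule order_tendstoD)
    then show ?thesis
      by (simp add: g_def)
  qed
  then have "eventually (\<lambda>s. \<forall>\<psi>\<in>{..<n} - {\<sigma>}. Dmax n X \<sigma> s < Dmax n X \<psi> s) (nhds t0)"
    by (intro eventually_ball_finite) auto
  moreover have "eventually (\<lambda>s. s \<in> {lo<..<hi}) (nhds t0)"
    using t0 by (intro eventually_nhds_in_open) auto
  ultimately have "eventually (\<lambda>s. s \<in> {lo<..<hi} \<and> strict_center n X \<sigma> s) (nhds t0)"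
    by eventually_elim (use \<sigma> in \<open>auto simp: strict_center_def\<close>)
  then show ?thesis
    by (auto simp: eventually_nhds_metric_le dist_real_def)
qed

lemma trajectoid_override:
  assumes close: "pairwise_eps_close n X eps {tt 0..tt tau}"
    and T: "trajectoid n X tt tau eps T"
    and ab: "tt 0 \<le> a" "a < b" "b \<le> tt tau" and "\<sigma>0 < n"
  shows "trajectoid n X tt tau eps (\<lambda>s. if s \<in> {a<..<b} then \<sigma>0 else T s)"
    (is "trajectoid n X tt tau eps ?T'")
proof -
  obtain m u where pp: "piece_partition (tt 0) (tt tau) T m u"
    and vals: "\<forall>s\<in>{tt 0..tt tau}. T s < n"
    using T unfolding trajectoid_iff_pairwise_eps_close[OF close] by blast
  have inc: "\<forall>k<m. u k < u (Suc k)" and ends: "u 0 = tt 0" "u m = tt tau"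
    and const: "\<forall>k<m. \<exists>\<sigma>. \<forall>s\<in>{u k<..<u (Suc k)}. T s = \<sigma>"
    using pp by (auto simp: piece_partition_def)
  have "\<exists>m' u'. u' 0 = tt 0 \<and> u' m' = tt tau \<and> (\<forall>k<m'. u' k < u' (Suc k)) \<and>
      (\<forall>k<m'. \<exists>\<sigma>. \<forall>s\<in>{u' k<..<u' (Suc k)}. ?T' s = \<sigma>)"
  proof (rule partition_avoiding_finite[where S = "u ` {..m} \<union> {a, b}"])
    show "tt 0 < tt tau" "finite (u ` {..m} \<union> {a, b})"
      using ab by auto
    fix p q
    assume pq: "tt 0 \<le> p" "p < q" "q \<le> tt tau" "{p<..<q} \<inter> (u ` {..m} \<union> {a, b}) = {}"
    obtain k where k: "k < m" "u k \<le> p" "q \<le> u (Suc k)"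
      using increasing_upto_interval_in_cell[OF inc pq(2)] pq ends by auto
    obtain \<tau> where \<tau>: "\<forall>s\<in>{u k<..<u (Suc k)}. T s = \<tau>"
      using const k(1) by auto
    show "\<exists>\<sigma>. \<forall>s\<in>{p<..<q}. ?T' s = \<sigma>"
    proof (cases "{p<..<q} \<inter> {a<..<b} = {}")
      case True
      then show ?thesis
        using \<tau> k by (intro exI[of _ \<tau>]) auto
    next
      case False
      then obtain w where w: "w \<in> {p<..<q}" "w \<in> {a<..<b}"
        by blast
      have "a \<notin> {p<..<q}" "b \<notin> {p<..<q}"
        using pq(4) by auto
      then have "{p<..<q} \<subseteq> {a<..<b}"
        using w by auto
      then show ?thesis
        by (intro exI[of _ \<sigma>0]) auto
    qed
  qed
  then obtain m' u' where "piece_partition (tt 0) (tt tau) ?T' m' u'"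
    unfolding piece_partition_def by blast
  moreover have "\<forall>s\<in>{tt 0..tt tau}. ?T' s < n"
    using vals \<open>\<sigma>0 < n\<close> by auto
  ultimately show ?thesis
    unfolding trajectoid_iff_pairwise_eps_close[OF close] by blast
qed

lemma traj_cost_override_less:
  assumes cont: "\<And>\<sigma>. \<sigma> < n \<Longrightarrow> continuous_on {tt 0..tt tau} (Dmax n X \<sigma>)"
    and vals: "\<forall>s\<in>{tt 0..tt tau}. T s < n" and pp: "piece_partition (tt 0) (tt tau) T m u"
    and ab: "tt 0 \<le> a" "a < b" "b \<le> tt tau"
    and \<sigma>: "\<sigma> < n" "\<forall>s\<in>{a<..<b}. T s = \<sigma>"
    and \<sigma>0: "\<sigma>0 < n" "\<forall>s\<in>{a..b}. Dmax n X \<sigma>0 s < Dmax n X \<sigma> s"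
  shows "traj_cost n X tt tau (\<lambda>s. if s \<in> {a<..<b} then \<sigma>0 else T s) < traj_cost n X tt tau T"
proof -
  define g where "g s = Dmax n X \<sigma> s - Dmax n X \<sigma>0 s" for s
  define h where "h s = (if s \<in> {a..b} then g s else 0)" for s
  have sub: "{a..b} \<subseteq> {tt 0..tt tau}"
    using ab by auto
  have g_cont: "continuous_on {a..b} g"
    unfolding g_def using continuous_on_subset[OF cont sub] \<sigma>(1) \<sigma>0(1)
    by (intro continuous_on_diff) auto
  have h: "h integrable_on {tt 0..tt tau}" "integral {tt 0..tt tau} h = integral {a..b} g"
    unfolding h_def Henstock_Kurzweil_Integration.integrable_restrict_Int
      Henstock_Kurzweil_Integration.integral_restrict_Int Int_absorb2[OF sub]
    using integrable_continuous_real[OF g_cont] by simp_all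
  have T_int: "(\<lambda>s. Dmax n X (T s) s) integrable_on {tt 0..tt tau}"
    by (rule piece_partition_integrable[OF cont vals pp])
  have "((\<lambda>s. Dmax n X (if s \<in> {a<..<b} then \<sigma>0 else T s) s) has_integral
      integral {tt 0..tt tau} (\<lambda>s. Dmax n X (T s) s) - integral {a..b} g) {tt 0..tt tau}"
  proof (rule has_integral_spike_finite[of "{a, b}" _ _ "\<lambda>s. Dmax n X (T s) s - h s"])
    show "((\<lambda>s. Dmax n X (T s) s - h s) has_integral
        integral {tt 0..tt tau} (\<lambda>s. Dmax n X (T s) s) - integral {a..b} g) {tt 0..tt tau}"
      using has_integral_diff[OF integrable_integral[OF T_int] integrable_integral[OF h(1)]] h(2)
      by simp
  qed (use \<sigma>(2) in \<open>auto simp: h_def g_def\<close>)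
  moreover have "integral {a..b} (\<lambda>_. 0) < integral {a..b} g"
    using \<sigma>0(2) ab(2) g_cont by (intro integral_less_real) (auto simp: g_def)
  ultimately show ?thesis
    unfolding traj_cost_def by (simp add: integral_unique)
qed

lemma central_trajectory_not_improvable:
  assumes inc: "strictly_increasing_times tt tau" and pl: "piecewise_linear_entities n X tt tau"
    and close: "pairwise_eps_close n X eps {tt 0..tt tau}"
    and central: "central_trajectory n X tt tau eps T"
    and ab: "tt 0 \<le> a" "a < b" "b \<le> tt tau"
    and \<sigma>: "\<sigma> < n" "\<forall>s\<in>{a<..<b}. T s = \<sigma>"
    and \<sigma>0: "\<sigma>0 < n" "\<forall>s\<in>{a..b}. Dmax n X \<sigma>0 s < Dmax n X \<sigma> s"
  shows False
proof -
  have contD: "continuous_on {tt 0..tt tau} (Dmax n X \<rho>)" if "\<rho> < n" for \<rho>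
    using continuous_on_piecewise_linear_entity[OF inc pl] that by (rule continuous_on_Dmax)
  have traj: "trajectoid n X tt tau eps T"
    using central by (simp add: central_trajectory_def)
  then obtain m u where pp: "piece_partition (tt 0) (tt tau) T m u"
    and vals: "\<forall>s\<in>{tt 0..tt tau}. T s < n"
    by (auto simp: trajectoid_def)
  have "traj_cost n X tt tau (\<lambda>s. if s \<in> {a<..<b} then \<sigma>0 else T s) < traj_cost n X tt tau T"
    by (rule traj_cost_override_less[OF contD vals pp ab \<sigma> \<sigma>0])
  moreover have "trajectoid n X tt tau eps (\<lambda>s. if s \<in> {a<..<b} then \<sigma>0 else T s)"
    by (rule trajectoid_override[OF close traj ab \<sigma>0(1)])
  ultimately show False
    using central unfolding central_trajectory_def by (meson not_le)
qed

lemma central_trajectory_near_strict_center: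
  assumes inc: "strictly_increasing_times tt tau" and pl: "piecewise_linear_entities n X tt tau"
    and close: "pairwise_eps_close n X eps {tt 0..tt tau}"
    and central: "central_trajectory n X tt tau eps T" and pp: "piece_partition (tt 0) (tt tau) T m u"
    and t0: "t0 \<in> {tt 0<..<tt tau}" and \<sigma>0: "strict_center n X \<sigma>0 t0"
  shows "\<exists>\<delta>>0. \<forall>k<m. \<forall>y. u k < y \<longrightarrow> y < u (Suc k) \<longrightarrow> \<bar>y - t0\<bar> < \<delta> \<longrightarrow> T y = \<sigma>0"
proof -
  obtain \<delta> where \<delta>: "\<delta> > 0" "\<forall>s. \<bar>s - t0\<bar> \<le> \<delta> \<longrightarrow> s \<in> {tt 0<..<tt tau} \<and> strict_center n X \<sigma>0 s"
    using strict_center_nearby[OF continuous_on_piecewise_linear_entity[OF inc pl] t0 \<sigma>0] by blast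
  have vals: "\<forall>s\<in>{tt 0..tt tau}. T s < n"
    using central by (simp add: central_trajectory_def trajectoid_def)
  have "T y = \<sigma>0" if k: "k < m" and y: "u k < y" "y < u (Suc k)" "\<bar>y - t0\<bar> < \<delta>" for k y
  proof (rule ccontr)
    assume "T y \<noteq> \<sigma>0"
    obtain \<sigma> where \<sigma>: "\<forall>s\<in>{u k<..<u (Suc k)}. T s = \<sigma>"
      using pp k unfolding piece_partition_def by blast
    have "y \<in> {tt 0..tt tau}"
      using \<delta>(2)[rule_format, of y] y(3) by auto
    moreover have "T y = \<sigma>"
      using \<sigma> y(1,2) by auto
    ultimately have "\<sigma> \<noteq> \<sigma>0" "\<sigma> < n"
      using \<open>T y \<noteq> \<sigma>0\<close> vals by auto
    define a where "a = max (u k) (t0 - \<delta>)"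
    define b where "b = min (u (Suc k)) (t0 + \<delta>)"
    have "t0 - \<delta> \<in> {tt 0<..<tt tau}" "t0 + \<delta> \<in> {tt 0<..<tt tau}"
      using \<delta> \<delta>(2)[rule_format, of "t0 - \<delta>"] \<delta>(2)[rule_format, of "t0 + \<delta>"] by auto
    moreover have "a < y" "y < b"
      using y by (auto simp: a_def b_def)
    ultimately have ab: "tt 0 \<le> a" "a < b" "b \<le> tt tau"
      by (auto simp: a_def b_def)
    have "strict_center n X \<sigma>0 s" if "s \<in> {a..b}" for s
      using \<delta>(2) that by (auto simp: a_def b_def)
    then have "\<forall>s\<in>{a..b}. Dmax n X \<sigma>0 s < Dmax n X \<sigma> s" "\<sigma>0 < n"
      using \<open>\<sigma> \<noteq> \<sigma>0\<close> \<open>\<sigma> < n\<close> \<sigma>0 by (auto simp: strict_center_def)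
    moreover have "\<forall>s\<in>{a<..<b}. T s = \<sigma>"
      using \<sigma> by (auto simp: a_def b_def)
    ultimately show False
      using central_trajectory_not_improvable[OF inc pl close central ab \<open>\<sigma> < n\<close>] by blast
  qed
  then show ?thesis
    using \<delta>(1) by blast
qed

section \<open>Counting pieces\<close>

lemma piece_partition_count_switches:
  assumes pp: "piece_partition lo hi T m u"
    and y: "\<forall>q<Q. y q \<in> {lo..hi} \<and> y q \<notin> u ` {..m}"
    and y_mono: "\<forall>q. Suc q < Q \<longrightarrow> y q < y (Suc q)"
    and switch: "\<forall>q. Suc q < Q \<longrightarrow> T (y q) \<noteq> T (y (Suc q))"
  shows "Q \<le> m"
proof -
  have inc: "\<forall>k<m. u k < u (Suc k)" and ends: "u 0 = lo" "u m = hi"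
    and const: "\<forall>k<m. \<exists>\<sigma>. \<forall>s\<in>{u k<..<u (Suc k)}. T s = \<sigma>"
    using pp by (auto simp: piece_partition_def)
  define cell where "cell q = (SOME k. k < m \<and> u k < y q \<and> y q < u (Suc k))" for q
  have cell: "cell q < m \<and> u (cell q) < y q \<and> y q < u (Suc (cell q))" if "q < Q" for q
  proof -
    have "\<exists>k. k < m \<and> u k < y q \<and> y q < u (Suc k)"
      using increasing_upto_cell[OF inc, of "y q"] y that ends by auto
    then show ?thesis
      unfolding cell_def by (rule someI_ex)
  qed
  have step: "cell q < cell (Suc q)" if q: "Suc q < Q" for q
  proof -
    have "u (cell q) < u (Suc (cell (Suc q)))"
      using cell[of q] cell[of "Suc q"] y_mono q by fastforce
    then have "cell q \<le> cell (Suc q)"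
      using increasing_upto_less_iff[OF inc] cell[of q] cell[of "Suc q"] q by fastforce
    moreover have "cell q \<noteq> cell (Suc q)"
    proof
      assume same: "cell q = cell (Suc q)"
      obtain \<sigma> where "\<forall>s\<in>{u (cell q)<..<u (Suc (cell q))}. T s = \<sigma>"
        using const cell[of q] q by auto
      then show False
        using switch cell[of q] cell[of "Suc q"] q same by force
    qed
    ultimately show ?thesis
      by simp
  qed
  have "cell i < cell j" if "i < j" "j < Q" for i j
    by (rule lift_Suc_mono_less_ivl[of "{q. Suc q < Q}"]) (use that step in auto)
  then have "strict_mono_on {..<Q} cell"
    by (intro strict_mono_onI) auto
  then have "card {..<Q} \<le> card {..<m}"
    using cell by (intro card_inj_on_le[of cell] strict_mono_on_imp_inj_on) auto
  then show ?thesis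
    by simp
qed

lemma traj_complexity_piece_partition:
  assumes inc: "strictly_increasing_times tt tau" and pl: "piecewise_linear_entities n X tt tau"
    and traj: "trajectoid n X tt tau eps T" and tau: "tau > 0"
  shows "\<exists>u. piece_partition (tt 0) (tt tau) T (traj_complexity X tt tau T) u"
proof -
  have inc': "\<forall>c<tau. tt c < tt (Suc c)"
    using inc by (simp add: strictly_increasing_times_def)
  obtain m u where pp: "piece_partition (tt 0) (tt tau) T m u"
    and vals: "\<forall>s\<in>{tt 0..tt tau}. T s < n"
    using traj by (auto simp: trajectoid_def)
  have inc_u: "\<forall>k<m. u k < u (Suc k)" and ends: "u 0 = tt 0" "u m = tt tau"
    and const: "\<forall>k<m. \<exists>\<sigma>. \<forall>s\<in>{u k<..<u (Suc k)}. T s = \<sigma>"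
    using pp by (auto simp: piece_partition_def)
  have "\<exists>m' u'. u' 0 = tt 0 \<and> u' m' = tt tau \<and> (\<forall>k<m'. u' k < u' (Suc k)) \<and>
      (\<forall>k<m'. (\<exists>\<sigma>. \<forall>s\<in>{u' k<..<u' (Suc k)}. T s = \<sigma>) \<and>
        (\<exists>a b. \<forall>s\<in>{u' k<..<u' (Suc k)}. X (T s) s = a * s + b))"
  proof (rule partition_avoiding_finite[where S = "u ` {..m} \<union> tt ` {..tau}"])
    show "tt 0 < tt tau"
      using increasing_upto_less[OF inc', of 0 tau] tau by auto
    show "finite (u ` {..m} \<union> tt ` {..tau})"
      by simp
    fix p q
    assume pq: "tt 0 \<le> p" "p < q" "q \<le> tt tau" "{p<..<q} \<inter> (u ` {..m} \<union> tt ` {..tau}) = {}"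
    obtain k where k: "k < m" "u k \<le> p" "q \<le> u (Suc k)"
      using increasing_upto_interval_in_cell[OF inc_u pq(2)] pq ends by auto
    obtain c where c: "c < tau" "tt c \<le> p" "q \<le> tt (Suc c)"
      using increasing_upto_interval_in_cell[OF inc' pq(2,1,3)] pq(4) by auto
    obtain \<sigma> where \<sigma>: "\<forall>s\<in>{u k<..<u (Suc k)}. T s = \<sigma>"
      using const k(1) by auto
    have "T ((p + q) / 2) = \<sigma>" "(p + q) / 2 \<in> {tt 0..tt tau}"
      using \<sigma> k pq(1-3) by auto
    then have "\<sigma> < n"
      using vals by auto
    then obtain a b where ab: "\<forall>s\<in>{tt c..tt (Suc c)}. X \<sigma> s = a * s + b"
      using pl c(1) unfolding piecewise_linear_entities_def by blast
    have "\<forall>s\<in>{p<..<q}. T s = \<sigma>"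
      using \<sigma> k by auto
    moreover from this have "\<forall>s\<in>{p<..<q}. X (T s) s = a * s + b"
      using ab c by auto
    ultimately show "(\<exists>\<sigma>. \<forall>s\<in>{p<..<q}. T s = \<sigma>) \<and> (\<exists>a b. \<forall>s\<in>{p<..<q}. X (T s) s = a * s + b)"
      by blast
  qed
  then have "\<exists>m u. piece_partition (tt 0) (tt tau) T m u \<and>
      (\<forall>k<m. \<exists>a b. \<forall>s\<in>{u k<..<u (Suc k)}. X (T s) s = a * s + b)"
    unfolding piece_partition_def by blast
  then have "\<exists>u. piece_partition (tt 0) (tt tau) T (traj_complexity X tt tau T) u \<and>
      (\<forall>k<traj_complexity X tt tau T. \<exists>a b. \<forall>s\<in>{u k<..<u (Suc k)}. X (T s) s = a * s + b)"
    unfolding traj_complexity_def by (rule LeastI_ex)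
  then show ?thesis
    by blast
qed

definition strict_center_switches ::
  "nat \<Rightarrow> (nat \<Rightarrow> real \<Rightarrow> real) \<Rightarrow> (nat \<Rightarrow> real) \<Rightarrow> nat \<Rightarrow> nat \<Rightarrow> (nat \<Rightarrow> real) \<Rightarrow> (nat \<Rightarrow> nat) \<Rightarrow> bool"
where
  "strict_center_switches n X tt tau Q t \<sigma> \<longleftrightarrow>
     (\<forall>q<Q. t q \<in> {tt 0<..<tt tau} \<and> strict_center n X (\<sigma> q) (t q)) \<and>
     (\<forall>q. Suc q < Q \<longrightarrow> t q < t (Suc q) \<and> \<sigma> q \<noteq> \<sigma> (Suc q))"

lemma central_trajectory_takes_strict_center:
  assumes inc: "strictly_increasing_times tt tau" and pl: "piecewise_linear_entities n X tt tau"
    and close: "pairwise_eps_close n X eps {tt 0..tt tau}"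
    and central: "central_trajectory n X tt tau eps T" and pp: "piece_partition (tt 0) (tt tau) T m u"
    and t0: "t0 \<in> {tt 0<..<tt tau}" and \<sigma>0: "strict_center n X \<sigma>0 t0" and "r > 0"
  shows "\<exists>y. y \<in> {tt 0..tt tau} \<and> y \<notin> u ` {..m} \<and> \<bar>y - t0\<bar> < r \<and> T y = \<sigma>0"
proof -
  have ends: "u 0 = tt 0" "u m = tt tau" and inc_u: "\<forall>k<m. u k < u (Suc k)"
    using pp by (auto simp: piece_partition_def)
  obtain \<delta> where \<delta>: "\<delta> > 0"
    "\<forall>k<m. \<forall>y. u k < y \<longrightarrow> y < u (Suc k) \<longrightarrow> \<bar>y - t0\<bar> < \<delta> \<longrightarrow> T y = \<sigma>0"
    using central_trajectory_near_strict_center[OF inc pl close central pp t0 \<sigma>0] by blast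
  define r' where "r' = min (min \<delta> r) (min (t0 - tt 0) (tt tau - t0))"
  have r': "0 < r'" "r' \<le> \<delta>" "r' \<le> r" "r' \<le> t0 - tt 0" "r' \<le> tt tau - t0"
    using \<delta>(1) \<open>r > 0\<close> t0 unfolding r'_def by auto
  then have "infinite ({t0 - r'<..<t0 + r'} - u ` {..m})"
    by (intro Diff_infinite_finite) auto
  then obtain y where y: "y \<in> {t0 - r'<..<t0 + r'}" "y \<notin> u ` {..m}"
    using infinite_imp_nonempty by blast
  then have "\<bar>y - t0\<bar> < r'"
    by (simp add: abs_less_iff)
  then have close_y: "\<bar>y - t0\<bar> < \<delta>" "\<bar>y - t0\<bar> < r" and y_in: "y \<in> {tt 0..tt tau}"
    using r' by (linarith, linarith, auto simp: abs_less_iff)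
  obtain k where "k < m" "u k < y" "y < u (Suc k)"
    using increasing_upto_cell[OF inc_u] ends y(2) y_in by auto
  then have "T y = \<sigma>0"
    using \<delta>(2) close_y(1) by blast
  then show ?thesis
    using y(2) close_y(2) y_in by blast
qed

lemma traj_complexity_ge_strict_center_switches:
  assumes inc: "strictly_increasing_times tt tau" and pl: "piecewise_linear_entities n X tt tau"
    and close: "pairwise_eps_close n X eps {tt 0..tt tau}" and tau: "tau > 0"
    and central: "central_trajectory n X tt tau eps T"
    and switches: "strict_center_switches n X tt tau Q t \<sigma>"
  shows "Q \<le> traj_complexity X tt tau T"
proof -
  let ?M = "traj_complexity X tt tau T"
  have "trajectoid n X tt tau eps T"
    using central by (simp add: central_trajectory_def)
  then obtain u where pp: "piece_partition (tt 0) (tt tau) T ?M u"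
    using traj_complexity_piece_partition[OF inc pl _ tau] by blast
  have t: "\<And>q. q < Q \<Longrightarrow> t q \<in> {tt 0<..<tt tau} \<and> strict_center n X (\<sigma> q) (t q)"
    and t_mono: "\<And>q. Suc q < Q \<Longrightarrow> t q < t (Suc q) \<and> \<sigma> q \<noteq> \<sigma> (Suc q)"
    using switches by (auto simp: strict_center_switches_def)
  define gap where "gap = Min (insert 1 ((\<lambda>q. t (Suc q) - t q) ` {q. Suc q < Q}))"
  have "finite {q. Suc q < Q}"
    by (rule finite_subset[of _ "{..<Q}"]) auto
  then have gap: "gap > 0" "\<And>q. Suc q < Q \<Longrightarrow> gap \<le> t (Suc q) - t q"
    using t_mono by (auto simp: gap_def)
  have "\<exists>y. y \<in> {tt 0..tt tau} \<and> y \<notin> u ` {..?M} \<and> \<bar>y - t q\<bar> < gap / 2 \<and> T y = \<sigma> q"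
    if "q < Q" for q
  proof -
    have "gap / 2 > 0"
      using gap(1) by simp
    then show ?thesis
      using central_trajectory_takes_strict_center[OF inc pl close central pp, of "t q" "\<sigma> q"] t[OF that]
      by blast
  qed
  then obtain y where y: "\<forall>q<Q. y q \<in> {tt 0..tt tau} \<and> y q \<notin> u ` {..?M} \<and>
      \<bar>y q - t q\<bar> < gap / 2 \<and> T (y q) = \<sigma> q"
    by metis
  show ?thesis
  proof (rule piece_partition_count_switches[OF pp])
    show "\<forall>q<Q. y q \<in> {tt 0..tt tau} \<and> y q \<notin> u ` {..?M}"
      using y by blast
    show "\<forall>q. Suc q < Q \<longrightarrow> y q < y (Suc q)"
    proof (intro allI impI)
      fix q
      assume q: "Suc q < Q"
      then have "\<bar>y q - t q\<bar> < gap / 2" "\<bar>y (Suc q) - t (Suc q)\<bar> < gap / 2"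
        using y by auto
      then show "y q < y (Suc q)"
        using gap(2)[OF q] unfolding abs_less_iff by linarith
    qed
    show "\<forall>q. Suc q < Q \<longrightarrow> T (y q) \<noteq> T (y (Suc q))"
      using y t_mono by auto
  qed
qed

definition hard_instance ::
  "nat \<Rightarrow> nat \<Rightarrow> real \<Rightarrow> (nat \<Rightarrow> real) \<Rightarrow> (nat \<Rightarrow> real \<Rightarrow> real) \<Rightarrow> nat \<Rightarrow> bool"
where
  "hard_instance n tau eps tt X Q \<longleftrightarrow>
     eps > 0 \<and> strictly_increasing_times tt tau \<and> piecewise_linear_entities n X tt tau \<and>
     distinct_entities n X tt tau \<and> pairwise_eps_close n X eps {tt 0..tt tau} \<and>
     (\<exists>t \<sigma>. strict_center_switches n X tt tau Q t \<sigma>)"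

lemma hard_instance_central_trajectories:
  assumes "hard_instance n tau eps tt X Q" "n > 0" "tau > 0"
  shows "(\<exists>T. central_trajectory n X tt tau eps T) \<and>
    (\<forall>T. central_trajectory n X tt tau eps T \<longrightarrow> Q \<le> traj_complexity X tt tau T)"
proof -
  obtain t \<sigma> where inc: "strictly_increasing_times tt tau" and pl: "piecewise_linear_entities n X tt tau"
    and close: "pairwise_eps_close n X eps {tt 0..tt tau}"
    and switches: "strict_center_switches n X tt tau Q t \<sigma>"
    using assms(1) by (auto simp: hard_instance_def)
  show ?thesis
    using central_trajectory_pointwise_center[OF inc pl close assms(2,3)]
      traj_complexity_ge_strict_center_switches[OF inc pl close assms(3) _ switches] by blast
qed

lemma Dmax_eq_max_range:
  assumes range: "\<forall>j<n. lo \<le> X j t \<and> X j t \<le> hi"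
    and attained: "\<exists>j<n. X j t = hi" "\<exists>j<n. X j t = lo" and "\<sigma> < n"
  shows "Dmax n X \<sigma> t = max (X \<sigma> t - lo) (hi - X \<sigma> t)"
proof -
  let ?D = "(\<lambda>\<psi>. \<bar>X \<sigma> t - X \<psi> t\<bar>) ` {..<n}"
  have fin: "finite ?D" "?D \<noteq> {}"
    using \<open>\<sigma> < n\<close> by auto
  obtain j1 j2 where j: "j1 < n" "X j1 t = hi" "j2 < n" "X j2 t = lo"
    using attained by blast
  have "\<bar>X \<sigma> t - X j1 t\<bar> \<le> Max ?D" "\<bar>X \<sigma> t - X j2 t\<bar> \<le> Max ?D"
    using fin j by (auto intro: Max_ge)
  moreover have "Max ?D \<le> max (X \<sigma> t - lo) (hi - X \<sigma> t)"
    using fin range by (subst Max_le_iff) (auto simp: abs_le_iff)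
  ultimately show ?thesis
    unfolding Dmax_def using j by (auto simp: abs_le_iff)
qed

lemma strict_center_midrange:
  assumes range: "\<forall>j<n. lo \<le> X j t \<and> X j t \<le> hi"
    and attained: "\<exists>j<n. X j t = hi" "\<exists>j<n. X j t = lo"
    and \<sigma>: "\<sigma> < n" "X \<sigma> t = (lo + hi) / 2" and others: "\<forall>\<psi><n. \<psi> \<noteq> \<sigma> \<longrightarrow> X \<psi> t \<noteq> X \<sigma> t"
  shows "strict_center n X \<sigma> t"
proof -
  have "Dmax n X \<sigma> t < Dmax n X \<psi> t" if \<psi>: "\<psi> < n" "\<psi> \<noteq> \<sigma>" for \<psi>
  proof -
    have "X \<psi> t \<noteq> (lo + hi) / 2"
      using others \<psi> \<sigma>(2) by auto
    then have "(hi - lo) / 2 < max (X \<psi> t - lo) (hi - X \<psi> t)"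
      by (cases "X \<psi> t < (lo + hi) / 2") (auto simp: less_max_iff_disj)
    then show ?thesis
      using Dmax_eq_max_range[where X = X and t = t and n = n and lo = lo and hi = hi, OF range attained]
        \<sigma> \<psi>(1) by (simp add: max_def)
  qed
  then show ?thesis
    using \<sigma>(1) by (simp add: strict_center_def)
qed

definition zigzag :: "real \<Rightarrow> real \<Rightarrow> real" where
  "zigzag K t = (let i = \<lfloor>t / K\<rfloor> in if even i then t - of_int i * K else (of_int i + 1) * K - t)"

lemma zigzag_on_period:
  assumes K: "K > 0" and t: "real i * K \<le> t" "t \<le> (real i + 1) * K"
  shows "zigzag K t = (if even i then t - real i * K else (real i + 1) * K - t)"
proof (cases "t < (real i + 1) * K")
  case True
  then have "\<lfloor>t / K\<rfloor> = int i"
    using K t by (subst floor_eq_iff) (auto simp: field_simps)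
  then show ?thesis
    by (simp add: zigzag_def)
next
  case False
  then have "t = (real i + 1) * K"
    using t by auto
  moreover have "\<lfloor>t / K\<rfloor> = int i + 1" if "t = (real i + 1) * K"
    using K that by simp
  ultimately show ?thesis
    by (auto simp: zigzag_def algebra_simps)
qed

lemma zigzag_range:
  assumes "K > 0"
  shows "0 \<le> zigzag K t \<and> zigzag K t \<le> K"
proof -
  define i where "i = \<lfloor>t / K\<rfloor>"
  have "of_int i \<le> t / K" "t / K < of_int i + 1"
    unfolding i_def by linarith+
  then have "of_int i * K \<le> t" "t < (of_int i + 1) * K"
    using assms by (auto simp: field_simps)
  then show ?thesis
    unfolding zigzag_def Let_def i_def[symmetric] by (auto simp: algebra_simps)
qed

lemma piecewise_linear_zigzag:
  assumes K: "K > 0" and tt: "\<And>i. tt i = K * real i"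
    and affine: "\<And>j. j < n \<Longrightarrow> \<exists>A B. \<forall>x. P j x = A * x + B"
  shows "piecewise_linear_entities n (\<lambda>j t. P j (zigzag K t)) tt tau"
  unfolding piecewise_linear_entities_def
proof (intro allI impI)
  fix j i
  assume "j < n"
  then obtain A B where AB: "\<And>x. P j x = A * x + B"
    using affine by blast
  have zigzag: "zigzag K s = (if even i then s - real i * K else (real i + 1) * K - s)"
    if "s \<in> {tt i..tt (Suc i)}" for s
    using zigzag_on_period[OF K, of i s] that by (simp add: tt algebra_simps)
  show "\<exists>a b. \<forall>s\<in>{tt i..tt (Suc i)}. P j (zigzag K s) = a * s + b"
  proof (cases "even i")
    case True
    have "P j (zigzag K s) = A * s + (B - A * real i * K)" if "s \<in> {tt i..tt (Suc i)}" for s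
      unfolding AB zigzag[OF that] using True by (simp add: algebra_simps)
    then show ?thesis
      by blast
  next
    case False
    have "P j (zigzag K s) = - A * s + (B + A * (real i + 1) * K)" if "s \<in> {tt i..tt (Suc i)}" for s
      unfolding AB zigzag[OF that] using False by (simp add: algebra_simps)
    then show ?thesis
      by blast
  qed
qed

lemma pairwise_eps_close_bounded:
  assumes "\<And>j t. j < n \<Longrightarrow> \<bar>X j t\<bar> \<le> B"
  shows "pairwise_eps_close n X (2 * B) I"
  unfolding pairwise_eps_close_def
proof (intro allI impI ballI)
  fix a b t
  assume "a < n" "b < n"
  then have "\<bar>X a t\<bar> \<le> B" "\<bar>X b t\<bar> \<le> B"
    using assms by auto
  then show "\<bar>X a t - X b t\<bar> \<le> 2 * B"
    by (simp add: abs_le_iff)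
qed

section \<open>The construction for at least five entities\<close>

text \<open>The upper lines \<open>j \<le> k\<close> are the tangents of \<open>line_height k + 8 x\<^sup>2\<close> at the integers, the
  lower lines the tangents of \<open>- line_height k - 8 x\<^sup>2\<close> at the half-integers \<open>c + 1/2\<close>,
  \<open>c < k\<close>. For \<open>x \<in> [0, k]\<close> the midpoint of the two envelopes is \<open>1 - 4 d\<close>, where \<open>d\<close> is the
  distance of \<open>x\<close> to the nearest integer.\<close>

definition line_height :: "nat \<Rightarrow> real" where
  "line_height k = 10 + 8 * (real k)^2"

definition middle_level :: "nat \<Rightarrow> nat \<Rightarrow> real" where
  "middle_level M r = -1 + (2 * real r + 1) / real M"

definition design_line :: "nat \<Rightarrow> nat \<Rightarrow> nat \<Rightarrow> real \<Rightarrow> real" where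
  "design_line k M j x =
    (if j \<le> k then 16 * real j * x + (line_height k - 8 * (real j)^2)
     else if j \<le> 2 * k then - (8 * (2 * real (j - k - 1) + 1)) * x + (8 * (real (j - k - 1) + 1/2)^2 - line_height k)
     else middle_level M (j - 2 * k - 1))"

lemma design_line_upper:
  "j \<le> k \<Longrightarrow> design_line k M j x = line_height k + 8 * x^2 - 8 * (x - real j)^2"
  by (simp add: design_line_def power2_eq_square algebra_simps)

lemma design_line_lower:
  "k < j \<Longrightarrow> j \<le> 2 * k \<Longrightarrow>
    design_line k M j x = - line_height k - 8 * x^2 + 8 * (x - real (j - k - 1) - 1/2)^2"
  by (simp add: design_line_def power2_eq_square algebra_simps)

lemma design_line_middle: "2 * k < j \<Longrightarrow> design_line k M j x = middle_level M (j - 2 * k - 1)"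
  by (simp add: design_line_def)

lemma design_line_affine: "\<exists>A B. \<forall>x. design_line k M j x = A * x + B"
proof -
  consider "j \<le> k" | "k < j" "j \<le> 2 * k" | "2 * k < j"
    by linarith
  then show ?thesis
  proof cases
    case 1
    then show ?thesis
      unfolding design_line_def
      by (intro exI[of _ "16 * real j"] exI[of _ "line_height k - 8 * (real j)^2"]) auto
  next
    case 2
    then show ?thesis
      unfolding design_line_def
      by (intro exI[of _ "- (8 * (2 * real (j - k - 1) + 1))"]
          exI[of _ "8 * (real (j - k - 1) + 1/2)^2 - line_height k"]) auto
  next
    case 3
    then show ?thesis
      unfolding design_line_def
      by (intro exI[of _ 0] exI[of _ "middle_level M (j - 2 * k - 1)"]) auto
  qed
qed

lemma middle_level_bounds: "r < M \<Longrightarrow> -1 < middle_level M r \<and> middle_level M r < 1"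
  by (auto simp: middle_level_def field_simps)

lemma middle_level_inj: "r < M \<Longrightarrow> r' < M \<Longrightarrow> middle_level M r = middle_level M r' \<Longrightarrow> r = r'"
  by (auto simp: middle_level_def field_simps)

lemma square_diff_le:
  fixes x y K :: real
  assumes "0 \<le> x" "x \<le> K" "0 \<le> y" "y \<le> K"
  shows "(x - y)^2 \<le> K^2"
  using assms by (simp add: abs_le_square_iff[symmetric] abs_le_iff)

lemma design_line_upper_ge:
  "j \<le> k \<Longrightarrow> 0 \<le> x \<Longrightarrow> x \<le> real k \<Longrightarrow> 10 + 8 * x^2 \<le> design_line k M j x"
  using square_diff_le[of x "real k" "real j"] by (simp add: design_line_upper line_height_def)

lemma design_line_lower_le:
  "k < j \<Longrightarrow> j \<le> 2 * k \<Longrightarrow> 0 \<le> x \<Longrightarrow> x \<le> real k \<Longrightarrow> design_line k M j x \<le> -10 - 8 * x^2"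
  using square_diff_le[of x "real k" "real (j - k - 1) + 1/2"]
  by (simp add: design_line_lower line_height_def algebra_simps)

lemma design_line_abs_le:
  assumes j: "j < 2 * k + 1 + M" and x: "0 \<le> x" "x \<le> real k"
  shows "\<bar>design_line k M j x\<bar> \<le> line_height k + 8 * (real k)^2"
proof -
  have "x^2 \<le> (real k)^2" "0 \<le> x^2"
    using x by (simp_all add: power_mono)
  consider "j \<le> k" | "k < j" "j \<le> 2 * k" | "2 * k < j"
    by linarith
  then show ?thesis
  proof cases
    case 1
    have "0 \<le> (x - real j)^2"
      by simp
    then show ?thesis
      using design_line_upper_ge[OF 1 x, of M] \<open>x^2 \<le> (real k)^2\<close> \<open>0 \<le> x^2\<close>
      unfolding design_line_upper[OF 1] abs_le_iff by linarith
  next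
    case 2
    have "0 \<le> (x - real (j - k - 1) - 1/2)^2"
      by simp
    then show ?thesis
      using design_line_lower_le[OF 2 x, of M] \<open>x^2 \<le> (real k)^2\<close> \<open>0 \<le> x^2\<close>
      unfolding design_line_lower[OF 2] abs_le_iff by linarith
  next
    case 3
    then have "j - 2 * k - 1 < M"
      using j by auto
    then have "\<bar>design_line k M j x\<bar> < 1"
      using middle_level_bounds design_line_middle[OF 3] by (simp add: abs_less_iff)
    then show ?thesis
      unfolding line_height_def using zero_le_power2[of "real k"] by linarith
  qed
qed

lemma design_line_upper_mono:
  "j \<le> k \<Longrightarrow> j' \<le> k \<Longrightarrow> \<bar>x - real j\<bar> \<le> \<bar>x - real j'\<bar> \<Longrightarrow> design_line k M j' x \<le> design_line k M j x"
  by (simp add: design_line_upper abs_le_square_iff)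

lemma design_line_lower_mono:
  "k < j \<Longrightarrow> j \<le> 2 * k \<Longrightarrow> k < j' \<Longrightarrow> j' \<le> 2 * k \<Longrightarrow>
    \<bar>x - real (j - k - 1) - 1/2\<bar> \<le> \<bar>x - real (j' - k - 1) - 1/2\<bar> \<Longrightarrow>
    design_line k M j x \<le> design_line k M j' x"
  by (simp add: design_line_lower abs_le_square_iff)

lemma abs_diff_nat_nearest:
  fixes y :: real
  assumes "\<bar>y - real c\<bar> \<le> 1/2"
  shows "\<bar>y - real c\<bar> \<le> \<bar>y - real j\<bar>"
proof -
  have near: "y - real c \<le> 1/2" "real c - y \<le> 1/2"
    using assms unfolding abs_le_iff by linarith+
  show ?thesis
  proof (cases j c rule: linorder_cases)
    case less
    then have "real j + 1 \<le> real c"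
      by simp
    then have "\<bar>y - real c\<bar> \<le> y - real j"
      unfolding abs_le_iff using near by linarith
    then show ?thesis
      by linarith
  next
    case greater
    then have "real c + 1 \<le> real j"
      by simp
    then have "\<bar>y - real c\<bar> \<le> real j - y"
      unfolding abs_le_iff using near by linarith
    then show ?thesis
      by linarith
  qed simp
qed

lemma design_line_extremes:
  assumes n: "n = 2 * k + 1 + M" and x: "0 \<le> x" "x \<le> real k"
    and ct: "ct \<le> k" "\<forall>j\<le>k. \<bar>x - real ct\<bar> \<le> \<bar>x - real j\<bar>"
    and cb: "cb < k" "\<forall>c<k. \<bar>x - real cb - 1/2\<bar> \<le> \<bar>x - real c - 1/2\<bar>"
    and j: "j < n"
  shows "design_line k M (k + 1 + cb) x \<le> design_line k M j x \<and> design_line k M j x \<le> design_line k M ct x"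
proof -
  have upper: "10 + 8 * x^2 \<le> design_line k M ct x"
    using design_line_upper_ge[OF ct(1) x] .
  have lower: "design_line k M (k + 1 + cb) x \<le> -10 - 8 * x^2"
    using design_line_lower_le[of k "k + 1 + cb"] cb(1) x by auto
  have "0 \<le> x^2"
    by simp
  consider "j \<le> k" | "k < j" "j \<le> 2 * k" | "2 * k < j"
    by linarith
  then show ?thesis
  proof cases
    case 1
    then have "design_line k M j x \<le> design_line k M ct x"
      using design_line_upper_mono[OF ct(1) 1] ct(2) by blast
    then show ?thesis
      using design_line_upper_ge[OF 1 x, of M] lower \<open>0 \<le> x^2\<close> by linarith
  next
    case 2
    have "\<bar>x - real (k + 1 + cb - k - 1) - 1/2\<bar> \<le> \<bar>x - real (j - k - 1) - 1/2\<bar>"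
      using cb(2)[rule_format, of "j - k - 1"] 2 by simp
    then have "design_line k M (k + 1 + cb) x \<le> design_line k M j x"
      by (rule design_line_lower_mono[rotated 4]) (use 2 cb(1) in auto)
    moreover have "design_line k M j x \<le> -10 - 8 * x^2"
      using design_line_lower_le[OF 2 x] .
    ultimately show ?thesis
      using upper \<open>0 \<le> x^2\<close> by linarith
  next
    case 3
    then have "j - 2 * k - 1 < M"
      using j n by auto
    then have "\<bar>design_line k M j x\<bar> < 1"
      using middle_level_bounds design_line_middle[OF 3] by (simp add: abs_less_iff)
    then show ?thesis
      using upper lower \<open>0 \<le> x^2\<close> unfolding abs_less_iff by linarith
  qed
qed

lemma design_line_middle_distinct:
  assumes n: "n = 2 * k + 1 + M" and x: "0 \<le> x" "x \<le> real k" and r: "r < M"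
    and j: "j < n" "j \<noteq> 2 * k + 1 + r"
  shows "design_line k M j x \<noteq> design_line k M (2 * k + 1 + r) x"
proof -
  have level: "design_line k M (2 * k + 1 + r) x = middle_level M r"
    using design_line_middle[of k "2 * k + 1 + r"] by simp
  have "\<bar>middle_level M r\<bar> < 1"
    using middle_level_bounds[OF r] by (simp add: abs_less_iff)
  moreover have "0 \<le> x^2"
    by simp
  moreover consider "j \<le> k" | "k < j" "j \<le> 2 * k" | "2 * k < j"
    by linarith
  then show ?thesis
  proof cases
    case 3
    then have "j - 2 * k - 1 < M" "j - 2 * k - 1 \<noteq> r"
      using j n by auto
    then show ?thesis
      using design_line_middle[OF 3] level middle_level_inj r by metis
  next
    case 1
    then have "10 \<le> design_line k M j x"
      using design_line_upper_ge[OF 1 x, of M] \<open>0 \<le> x^2\<close> by linarith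
    then show ?thesis
      using level \<open>\<bar>middle_level M r\<bar> < 1\<close> by (auto simp: abs_less_iff)
  next
    case 2
    then have "design_line k M j x \<le> -10"
      using design_line_lower_le[OF 2 x, of M] \<open>0 \<le> x^2\<close> by linarith
    then show ?thesis
      using level \<open>\<bar>middle_level M r\<bar> < 1\<close> by (auto simp: abs_less_iff)
  qed
qed

lemma design_middle_strict_center:
  assumes n: "n = 2 * k + 1 + M" and r: "r < M"
    and X: "\<And>j. X j t = design_line k M j y" and y: "0 \<le> y" "y \<le> real k"
    and ct: "ct \<le> k" "\<bar>y - real ct\<bar> \<le> 1/2" and cb: "cb < k" "\<bar>y - real cb - 1/2\<bar> \<le> 1/2"
    and level: "middle_level M r = 4 * ((y - real cb - 1/2)^2 - (y - real ct)^2)"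
  shows "strict_center n X (2 * k + 1 + r) t"
proof -
  have nearest_upper: "\<forall>j\<le>k. \<bar>y - real ct\<bar> \<le> \<bar>y - real j\<bar>"
    using abs_diff_nat_nearest[OF ct(2)] by blast
  have nearest_lower: "\<forall>c<k. \<bar>y - real cb - 1/2\<bar> \<le> \<bar>y - real c - 1/2\<bar>"
    using abs_diff_nat_nearest[of "y - 1/2" cb] cb(2) by (simp add: algebra_simps)
  let ?hi = "design_line k M ct y" and ?lo = "design_line k M (k + 1 + cb) y"
  have hi: "?hi = line_height k + 8 * y^2 - 8 * (y - real ct)^2"
    by (rule design_line_upper[OF ct(1)])
  have lo: "?lo = - line_height k - 8 * y^2 + 8 * (y - real cb - 1/2)^2"
    using design_line_lower[of k "k + 1 + cb"] cb(1) by simp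
  show ?thesis
  proof (rule strict_center_midrange[where hi = ?hi and lo = ?lo])
    show "\<forall>j<n. ?lo \<le> X j t \<and> X j t \<le> ?hi"
      using design_line_extremes[OF n y ct(1) nearest_upper cb(1) nearest_lower] X by simp
    show "\<exists>j<n. X j t = ?hi"
      using ct n X by (intro exI[of _ ct]) auto
    show "\<exists>j<n. X j t = ?lo"
      using cb n X by (intro exI[of _ "k + 1 + cb"]) auto
    show "2 * k + 1 + r < n"
      using n r by simp
    have "X (2 * k + 1 + r) t = middle_level M r"
      using X design_line_middle[of k "2 * k + 1 + r"] by simp
    then show "X (2 * k + 1 + r) t = (?lo + ?hi) / 2"
      unfolding hi lo level by (simp add: algebra_simps)
    show "\<forall>\<psi><n. \<psi> \<noteq> 2 * k + 1 + r \<longrightarrow> X \<psi> t \<noteq> X (2 * k + 1 + r) t"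
      using design_line_middle_distinct[OF n y r] X by simp
  qed
qed

lemma design_middle_strict_center_half_unit:
  assumes n: "n = 2 * k + 1 + M" and r: "r < M"
    and X: "\<And>j. X j t = design_line k M j y" and y: "0 \<le> y" "y \<le> real k"
    and c: "c < k" and x: "0 < x" "x < 1/2"
    and form: "y = real c + x \<and> middle_level M r = 1 - 4 * x \<or>
      y = real c + 1/2 + x \<and> middle_level M r = 4 * x - 1"
  shows "strict_center n X (2 * k + 1 + r) t"
  using form
proof
  assume "y = real c + x \<and> middle_level M r = 1 - 4 * x"
  then show ?thesis
    using c x
    by (intro design_middle_strict_center[where X = X and t = t and y = y and k = k and M = M
          and ct = c and cb = c, OF n r X y])
      (auto simp: abs_le_iff power2_eq_square algebra_simps)
next
  assume "y = real c + 1/2 + x \<and> middle_level M r = 4 * x - 1"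
  then show ?thesis
    using c x
    by (intro design_middle_strict_center[where X = X and t = t and y = y and k = k and M = M
          and ct = "Suc c" and cb = c, OF n r X y])
      (auto simp: abs_le_iff power2_eq_square algebra_simps)
qed

text \<open>At time \<open>w / 2 + \<delta>\<close> with \<open>0 < \<delta> < 1/2\<close> the zigzag of period \<open>2 k\<close> is at distance
  \<open>\<delta>\<close> (for even \<open>w\<close>) or \<open>1/2 - \<delta>\<close> (for odd \<open>w\<close>) from the nearest integer.\<close>

lemma zigzag_half_unit:
  fixes w :: nat
  assumes k: "k \<ge> 1" and \<delta>: "0 < \<delta>" "\<delta> < 1/2"
  defines "y \<equiv> zigzag (real k) (real w / 2 + \<delta>)"
    and "level \<equiv> (if even w then 1 - 4 * \<delta> else 4 * \<delta> - 1)"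
  shows "\<exists>c<k. \<exists>x. 0 < x \<and> x < 1/2 \<and>
    (y = real c + x \<and> level = 1 - 4 * x \<or> y = real c + 1/2 + x \<and> level = 4 * x - 1)"
proof -
  define i where "i = w div 2 div k"
  define c where "c = w div 2 mod k"
  define b :: real where "b = (if even w then 0 else 1/2)"
  have "c < k"
    using k by (simp add: c_def)
  moreover from this have "real (c + 1) \<le> real k"
    by (intro of_nat_mono) simp
  ultimately have c: "c < k" "real c + 1 \<le> real k"
    by simp_all
  have "w = 2 * (i * k + c) + (if even w then 0 else 1)"
    unfolding i_def c_def by simp
  then have "real w = real (2 * (i * k + c) + (if even w then 0 else 1))"
    by (rule arg_cong)
  then have t: "real w / 2 + \<delta> = real i * real k + real c + b + \<delta>"
    unfolding b_def by (cases "even w") (simp_all add: field_simps)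
  have "0 \<le> b" "b \<le> 1/2"
    by (simp_all add: b_def)
  then have y: "y = (if even i then real c + b + \<delta> else real k - real c - b - \<delta>)"
    unfolding y_def t using zigzag_on_period[of "real k" i] k c(2) \<delta>
    by (simp add: algebra_simps)
  show ?thesis
  proof (cases "even i")
    case True
    then show ?thesis
      using y c(1) \<delta> by (intro exI[of _ c] conjI exI[of _ \<delta>]) (auto simp: b_def level_def)
  next
    case False
    have "real (k - c - 1) = real k - real c - 1"
      using c(1) by simp
    then show ?thesis
      using y c(1) \<delta> False
      by (intro exI[of _ "k - c - 1"] conjI exI[of _ "1/2 - \<delta>"]) (auto simp: b_def level_def)
  qed
qed

lemma design_strict_center_at_test_time:
  assumes k: "k \<ge> 1" and M: "M \<ge> 2" and jj: "jj < M - 1"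
  shows "strict_center (2 * k + 1 + M) (\<lambda>j t. design_line k M j (zigzag (real k) t))
    (2 * k + 1 + (if even w then M - 1 - jj else jj)) (real w / 2 + (2 * real jj + 1) / (4 * real M))"
proof -
  define \<delta> where "\<delta> = (2 * real jj + 1) / (4 * real M)"
  define r where "r = (if even w then M - 1 - jj else jj)"
  have \<delta>: "0 < \<delta>" "\<delta> < 1/2"
    using jj M by (auto simp: \<delta>_def field_simps)
  have "middle_level M r = (if even w then 1 - 4 * \<delta> else 4 * \<delta> - 1)"
    using jj M by (auto simp: middle_level_def \<delta>_def r_def field_simps)
  then obtain c x where "c < k" "0 < x" "x < 1/2"
    "zigzag (real k) (real w / 2 + \<delta>) = real c + x \<and> middle_level M r = 1 - 4 * x \<or>
     zigzag (real k) (real w / 2 + \<delta>) = real c + 1/2 + x \<and> middle_level M r = 4 * x - 1"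
    using zigzag_half_unit[OF k \<delta>, of w] by auto
  moreover have "0 \<le> zigzag (real k) (real w / 2 + \<delta>)" "zigzag (real k) (real w / 2 + \<delta>) \<le> real k"
    using zigzag_range[of "real k"] k by auto
  moreover have "r < M"
    using jj by (auto simp: r_def)
  ultimately show ?thesis
    unfolding \<delta>_def[symmetric] r_def[symmetric]
    by (intro design_middle_strict_center_half_unit[of _ k M]) auto
qed

lemma design_line_ranges:
  assumes l: "l < 2 * k + 1 + M" and x: "0 \<le> x" "x \<le> real k"
  shows "l \<le> k \<and> 10 \<le> design_line k M l x \<or>
    k < l \<and> l \<le> 2 * k \<and> design_line k M l x \<le> -10 \<or>
    2 * k < l \<and> \<bar>design_line k M l x\<bar> < 1"
proof -
  have "0 \<le> x^2"
    by simp
  consider "l \<le> k" | "k < l" "l \<le> 2 * k" | "2 * k < l"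
    by linarith
  then show ?thesis
  proof cases
    case 1
    then show ?thesis
      using design_line_upper_ge[OF 1 x, of M] \<open>0 \<le> x^2\<close> by linarith
  next
    case 2
    then show ?thesis
      using design_line_lower_le[OF 2 x, of M] \<open>0 \<le> x^2\<close> by linarith
  next
    case 3
    then have "l - 2 * k - 1 < M"
      using l by auto
    then show ?thesis
      using 3 middle_level_bounds design_line_middle[OF 3] by (simp add: abs_less_iff)
  qed
qed

lemma design_lines_distinct:
  assumes i: "i < 2 * k + 1 + M" and j: "j < 2 * k + 1 + M" and "i \<noteq> j"
  shows "design_line k M i 0 \<noteq> design_line k M j 0"
proof
  assume eq: "design_line k M i 0 = design_line k M j 0"
  have upper: "real i ^ 2 = real j ^ 2" if "i \<le> k" "j \<le> k"
    using eq that by (simp add: design_line_upper)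
  have lower: "(0 - real (i - k - 1) - 1/2)^2 = (0 - real (j - k - 1) - 1/2)^2"
    if "k < i" "i \<le> 2 * k" "k < j" "j \<le> 2 * k"
    using eq design_line_lower[OF that(1,2), of M 0] design_line_lower[OF that(3,4), of M 0] by linarith
  have middle: "middle_level M (i - 2 * k - 1) = middle_level M (j - 2 * k - 1)" if "2 * k < i" "2 * k < j"
    using eq that by (simp add: design_line_middle)
  from design_line_ranges[OF i order_refl of_nat_0_le_iff]
    design_line_ranges[OF j order_refl of_nat_0_le_iff] show False
  proof (elim disjE conjE)
    assume "i \<le> k" "j \<le> k"
    then show False
      using upper \<open>i \<noteq> j\<close> by simp
  next
    assume "k < i" "i \<le> 2 * k" "k < j" "j \<le> 2 * k"
    then have "(0 - real (i - k - 1) - 1/2)^2 = (0 - real (j - k - 1) - 1/2)^2"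
      using lower by blast
    then have "real (i - k - 1) = real (j - k - 1)"
      by (auto simp: power2_eq_iff)
    then show False
      using \<open>k < i\<close> \<open>k < j\<close> \<open>i \<noteq> j\<close> by simp
  next
    assume "2 * k < i" "2 * k < j"
    moreover have "i - 2 * k - 1 < M" "j - 2 * k - 1 < M"
      using i j \<open>2 * k < i\<close> \<open>2 * k < j\<close> by auto
    ultimately have "i - 2 * k - 1 = j - 2 * k - 1"
      using middle middle_level_inj by blast
    then show False
      using \<open>2 * k < i\<close> \<open>2 * k < j\<close> \<open>i \<noteq> j\<close> by simp
  qed (use eq in \<open>auto simp: abs_less_iff\<close>)
qed

lemma test_offset_bounds:
  assumes M: "M \<ge> 2"
  shows "0 < (2 * real (q mod (M - 1)) + 1) / (4 * real M)"
    and "(2 * real (q mod (M - 1)) + 1) / (4 * real M) < 1/2"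
proof -
  have "q mod (M - 1) + 1 \<le> M - 1"
    using M by (simp add: Suc_le_eq)
  then have "real (q mod (M - 1) + 1) \<le> real (M - 1)"
    by (rule of_nat_mono)
  then have "real (q mod (M - 1)) + 1 \<le> real M - 1"
    using M by simp
  then show "0 < (2 * real (q mod (M - 1)) + 1) / (4 * real M)"
    and "(2 * real (q mod (M - 1)) + 1) / (4 * real M) < 1/2"
    using M by (auto simp: field_simps)
qed

lemma big_design_test_times_step:
  fixes k :: nat
  assumes M: "M \<ge> 2"
  defines "t \<equiv> \<lambda>q. real (q div (M - 1)) / 2 + (2 * real (q mod (M - 1)) + 1) / (4 * real M)"
    and "\<sigma> \<equiv> \<lambda>q. 2 * k + 1 + (if even (q div (M - 1)) then M - 1 - q mod (M - 1) else q mod (M - 1))"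
  shows "t q < t (Suc q) \<and> \<sigma> q \<noteq> \<sigma> (Suc q)"
proof (cases "Suc q mod (M - 1) = 0")
  case True
  then have div: "Suc q div (M - 1) = Suc (q div (M - 1))" and "q mod (M - 1) = M - 2"
    using M by (auto simp: div_Suc mod_Suc split: if_splits)
  have "t q < real (q div (M - 1)) / 2 + 1/2"
    using test_offset_bounds(2)[OF M, of q] by (simp add: t_def)
  also have "\<dots> < t (Suc q)"
    using test_offset_bounds(1)[OF M, of "Suc q"] div by (simp add: t_def add_divide_distrib)
  finally have "t q < t (Suc q)" .
  moreover have "\<sigma> q \<noteq> \<sigma> (Suc q)"
    using True div \<open>q mod (M - 1) = M - 2\<close> M by (auto simp: \<sigma>_def)
  ultimately show ?thesis
    by blast
next
  case False
  then have "Suc q div (M - 1) = q div (M - 1)" "Suc q mod (M - 1) = Suc (q mod (M - 1))"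
    using M by (auto simp: div_Suc mod_Suc split: if_splits)
  moreover have "Suc q mod (M - 1) < M - 1"
    using M by simp
  ultimately show ?thesis
    using M by (auto simp: t_def \<sigma>_def field_simps)
qed

lemma big_design_switches:
  assumes k: "k \<ge> 1" and M: "M \<ge> 2"
  defines "m \<equiv> M - 1"
  shows "strict_center_switches (2 * k + 1 + M) (\<lambda>j t. design_line k M j (zigzag (real k) t))
    (\<lambda>i. real k * real i) tau (2 * k * tau * m)
    (\<lambda>q. real (q div m) / 2 + (2 * real (q mod m) + 1) / (4 * real M))
    (\<lambda>q. 2 * k + 1 + (if even (q div m) then M - 1 - q mod m else q mod m))"
    (is "strict_center_switches _ _ _ _ ?Q ?t ?\<sigma>")
proof -
  have "?t q \<in> {0<..<real k * real tau} \<and> strict_center (2 * k + 1 + M)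
      (\<lambda>j t. design_line k M j (zigzag (real k) t)) (?\<sigma> q) (?t q)" if q: "q < ?Q" for q
  proof -
    have "m \<ge> 1"
      using M by (simp add: m_def)
    then have "q div m + 1 \<le> 2 * k * tau"
      using q by (simp add: less_mult_imp_div_less Suc_le_eq)
    then have "real (q div m) + 1 \<le> 2 * real k * real tau"
      by (metis of_nat_1 of_nat_add of_nat_le_iff of_nat_mult of_nat_numeral)
    then have "0 < ?t q" "?t q < real k * real tau"
      using test_offset_bounds[OF M, of q] unfolding m_def by (simp add: add_nonneg_pos, linarith)
    moreover have "q mod m < M - 1"
      using \<open>m \<ge> 1\<close> by (simp add: m_def)
    ultimately show ?thesis
      using design_strict_center_at_test_time[OF k M, of "q mod m" "q div m"] by simp
  qed
  moreover have "?t q < ?t (Suc q) \<and> ?\<sigma> q \<noteq> ?\<sigma> (Suc q)" for q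
    using big_design_test_times_step[OF M] unfolding m_def .
  ultimately show ?thesis
    unfolding strict_center_switches_def by simp
qed

lemma big_design_hard_instance:
  assumes k: "k \<ge> 1" and M: "M \<ge> 2" and tau: "tau \<ge> 1"
  shows "hard_instance (2 * k + 1 + M) tau (2 * (line_height k + 8 * (real k)^2)) (\<lambda>i. real k * real i)
    (\<lambda>j t. design_line k M j (zigzag (real k) t)) (2 * k * tau * (M - 1))"
  unfolding hard_instance_def
proof (intro conjI)
  have K: "real k > 0"
    using k by simp
  show "0 < 2 * (line_height k + 8 * (real k)^2)"
    by (simp add: line_height_def add_nonneg_pos)
  show "strictly_increasing_times (\<lambda>i. real k * real i) tau"
    using K by (simp add: strictly_increasing_times_def)
  show "piecewise_linear_entities (2 * k + 1 + M) (\<lambda>j t. design_line k M j (zigzag (real k) t))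
      (\<lambda>i. real k * real i) tau"
    by (rule piecewise_linear_zigzag[OF K]) (use design_line_affine in auto)
  have "zigzag (real k) 0 = 0"
    using zigzag_on_period[OF K, of 0 0] by simp
  then show "distinct_entities (2 * k + 1 + M) (\<lambda>j t. design_line k M j (zigzag (real k) t))
      (\<lambda>i. real k * real i) tau"
    unfolding distinct_entities_def using design_lines_distinct by (auto intro!: bexI[of _ 0])
  show "pairwise_eps_close (2 * k + 1 + M) (\<lambda>j t. design_line k M j (zigzag (real k) t))
      (2 * (line_height k + 8 * (real k)^2)) {real k * real 0..real k * real tau}"
    by (rule pairwise_eps_close_bounded) (use design_line_abs_le zigzag_range[OF K] in blast)
  show "\<exists>t \<sigma>. strict_center_switches (2 * k + 1 + M) (\<lambda>j t. design_line k M j (zigzag (real k) t))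
      (\<lambda>i. real k * real i) tau (2 * k * tau * (M - 1)) t \<sigma>"
    using big_design_switches[OF k M] by blast
qed

section \<open>The construction for three or four entities\<close>

text \<open>The center is entity \<open>0\<close> while entity \<open>2\<close> is high and entity \<open>2\<close> while it is low, so
  it alternates once per time unit.\<close>

definition small_line :: "nat \<Rightarrow> real \<Rightarrow> real" where
  "small_line j x = (if j = 0 then 0 else if j = 1 then -10 else if j = 2 then 9 - 18 * x else -11)"

lemma small_line_strict_center:
  assumes n: "n = 3 \<or> n = 4" and X: "\<And>j. X j t = small_line j x"
    and x: "x = 0 \<or> x = 1/4 \<or> x = 3/4 \<or> x = 1"
  shows "strict_center n X (if x \<le> 1/4 then 0 else 2) t"
proof -
  define hi where "hi = (if x \<le> 1/4 then 9 - 18 * x else (0::real))"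
  define lo where "lo = (if n = 4 then -11 else (-10::real))"
  have entity: "j = 0 \<or> j = 1 \<or> j = 2 \<or> j = 3 \<and> n = 4" if "j < n" for j
    using n that by auto
  have range: "\<forall>j<n. lo \<le> X j t \<and> X j t \<le> hi"
    using entity x n by (auto simp: X small_line_def hi_def lo_def)
  have hi_attained: "\<exists>j<n. X j t = hi"
    using n by (cases "x \<le> 1/4") (auto simp: X small_line_def hi_def intro: exI[of _ 0] exI[of _ 2])
  have lo_attained: "\<exists>j<n. X j t = lo"
    using n by (cases "n = 4") (auto simp: X small_line_def lo_def intro: exI[of _ 1] exI[of _ 3])
  have D: "Dmax n X j t = max (small_line j x - lo) (hi - small_line j x)" if "j < n" for j
    using Dmax_eq_max_range[where X = X and t = t and lo = lo and hi = hi, OF range hi_attained lo_attained that]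
    by (simp add: X)
  show ?thesis
    unfolding strict_center_def
  proof (intro conjI allI impI)
    show \<sigma>: "(if x \<le> 1/4 then 0 else 2) < n"
      using n by auto
    fix \<psi>
    assume "\<psi> < n" "\<psi> \<noteq> (if x \<le> 1/4 then 0 else 2)"
    then show "Dmax n X (if x \<le> 1/4 then 0 else 2) t < Dmax n X \<psi> t"
      unfolding D[OF \<sigma>] D[OF \<open>\<psi> < n\<close>] using entity[OF \<open>\<psi> < n\<close>] x n
      by (auto simp: small_line_def hi_def lo_def max_def)
  qed
qed

lemma zigzag_one_test_times:
  assumes tau: "tau \<ge> 1" and q: "q \<le> tau"
  shows "zigzag 1 (if q = 0 then 1/4 else if q = tau then real tau - 1/4 else real q)
    \<in> (if even q then {0, 1/4} else {3/4, 1})"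
proof -
  consider "q = 0" | "q = tau" "q \<noteq> 0" | "q \<noteq> 0" "q \<noteq> tau"
    by blast
  then show ?thesis
  proof cases
    case 1
    then show ?thesis
      using zigzag_on_period[of 1 0 "1/4"] by simp
  next
    case 2
    have "real (tau - 1) = real tau - 1"
      using tau by simp
    then have "zigzag 1 (real tau - 1/4) = (if even (tau - 1) then 3/4 else 1/4)"
      using zigzag_on_period[of 1 "tau - 1" "real tau - 1/4"] by simp
    moreover have "even (tau - 1) \<longleftrightarrow> odd tau"
      using tau by (cases tau) auto
    ultimately show ?thesis
      using 2 by auto
  next
    case 3
    then show ?thesis
      using zigzag_on_period[of 1 q "real q"] by auto
  qed
qed

lemma small_design_switches:
  assumes n: "n = 3 \<or> n = 4" and tau: "tau \<ge> 1"
  shows "strict_center_switches n (\<lambda>j t. small_line j (zigzag 1 t)) real tau (tau + 1)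
    (\<lambda>q. if q = 0 then 1/4 else if q = tau then real tau - 1/4 else real q) (\<lambda>q. if even q then 0 else 2)"
    (is "strict_center_switches _ _ _ _ _ ?t _")
proof -
  note zigzag = zigzag_one_test_times[OF tau]
  have "?t q \<in> {real 0<..<real tau} \<and>
      strict_center n (\<lambda>j t. small_line j (zigzag 1 t)) (if even q then 0 else 2) (?t q)"
    if "q < tau + 1" for q
  proof -
    have q: "q \<le> tau"
      using that by simp
    define x where "x = zigzag 1 (?t q)"
    have "x = 0 \<or> x = 1/4 \<or> x = 3/4 \<or> x = 1"
      using zigzag[OF q] by (auto simp: x_def split: if_splits)
    then have "strict_center n (\<lambda>j t. small_line j (zigzag 1 t)) (if x \<le> 1/4 then 0 else 2) (?t q)"
      by (intro small_line_strict_center[OF n]) (simp add: x_def)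
    moreover have "(if x \<le> 1/4 then 0 else 2) = (if even q then 0 else (2::nat))"
      using zigzag[OF q] by (auto simp: x_def split: if_splits)
    moreover have "?t q \<in> {real 0<..<real tau}"
      using q tau by auto
    ultimately show ?thesis
      by simp
  qed
  moreover have "?t q < ?t (Suc q)" if "Suc q < tau + 1" for q
    using that by auto
  ultimately show ?thesis
    unfolding strict_center_switches_def by simp
qed

lemma small_design_hard_instance:
  assumes n: "n = 3 \<or> n = 4" and tau: "tau \<ge> 1"
  shows "hard_instance n tau 22 real (\<lambda>j t. small_line j (zigzag 1 t)) (tau + 1)"
  unfolding hard_instance_def
proof (intro conjI)
  have "zigzag 1 0 = 0"
    using zigzag_on_period[of 1 0 0] by simp
  then show "distinct_entities n (\<lambda>j t. small_line j (zigzag 1 t)) real tau"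
    unfolding distinct_entities_def using n by (auto simp: small_line_def intro!: bexI[of _ 0])
  have "pairwise_eps_close n (\<lambda>j t. small_line j (zigzag 1 t)) (2 * 11) {real 0..real tau}"
  proof (rule pairwise_eps_close_bounded)
    fix j t
    have "0 \<le> zigzag 1 t" "zigzag 1 t \<le> 1"
      using zigzag_range[of 1 t] by auto
    then show "\<bar>small_line j (zigzag 1 t)\<bar> \<le> 11"
      by (auto simp: small_line_def abs_le_iff)
  qed
  then show "pairwise_eps_close n (\<lambda>j t. small_line j (zigzag 1 t)) 22 {real 0..real tau}"
    by simp
  have "\<exists>A B. \<forall>x. small_line j x = A * x + B" for j
    by (intro exI[of _ "if j = 2 then -18 else 0"]
        exI[of _ "if j = 0 then 0 else if j = 1 then -10 else if j = 2 then 9 else -11"])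
      (simp add: small_line_def)
  then show "piecewise_linear_entities n (\<lambda>j t. small_line j (zigzag 1 t)) real tau"
    by (intro piecewise_linear_zigzag) auto
  show "\<exists>t \<sigma>. strict_center_switches n (\<lambda>j t. small_line j (zigzag 1 t)) real tau (tau + 1) t \<sigma>"
    using small_design_switches[OF n tau] by blast
qed (simp_all add: strictly_increasing_times_def)

lemma hard_instance_exists:
  assumes n: "n \<ge> 3" and tau: "tau \<ge> 1"
  shows "\<exists>eps tt X Q. hard_instance n tau eps tt X Q \<and> real tau * real n ^ 2 \<le> 50 * real Q"
proof (cases "n \<ge> 5")
  case True
  define k where "k = (n - 1) div 4"
  define M where "M = n - 2 * k - 1"
  have k: "k \<ge> 1" "4 * k \<le> n - 1" "n - 1 < 4 * k + 4"
    using True by (auto simp: k_def)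
  then have M: "M \<ge> 2" "k \<le> M - 1" and n_eq: "n = 2 * k + 1 + M"
    unfolding M_def by auto
  have "real n \<le> 8 * real k"
    using k by linarith
  then have "real n ^ 2 \<le> (8 * real k)^2"
    by (rule power_mono) simp
  then have "real tau * real n ^ 2 \<le> real tau * (64 * (real k)^2)"
    by (simp add: mult_left_mono power_mult_distrib)
  also have "\<dots> \<le> 50 * (real tau * (2 * (real k * real k)))"
    by (simp add: power2_eq_square)
  also have "\<dots> \<le> 50 * (real tau * (2 * (real k * real (M - 1))))"
    using M(2) by (intro mult_left_mono) auto
  also have "\<dots> = 50 * real (2 * k * tau * (M - 1))"
    by simp
  finally have "real tau * real n ^ 2 \<le> 50 * real (2 * k * tau * (M - 1))" .
  then show ?thesis
    using big_design_hard_instance[OF k(1) M(1) tau] unfolding n_eq[symmetric] by blast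
next
  case False
  then have "n = 3 \<or> n = 4"
    using n by auto
  moreover from this have "real tau * real n ^ 2 \<le> 50 * real (tau + 1)"
    by auto
  ultimately show ?thesis
    using small_design_hard_instance[OF _ tau] by blast
qed

theorem mainTheorem3:
  "\<exists>c::real. c > 0 \<and>
     (\<forall>n::nat. \<forall>tau::nat. n \<ge> 3 \<longrightarrow> tau \<ge> 1 \<longrightarrow>
       (\<exists>eps::real. \<exists>tt::nat \<Rightarrow> real. \<exists>X::nat \<Rightarrow> real \<Rightarrow> real.
          eps > 0 \<and> strictly_increasing_times tt tau \<and>
          piecewise_linear_entities n X tt tau \<and> distinct_entities n X tt tau \<and>
          (\<exists>T. central_trajectory n X tt tau eps T) \<and>
          (\<forall>T. central_trajectory n X tt tau eps T \<longrightarrow>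
                real (traj_complexity X tt tau T) \<ge> c * real tau * real n ^ 2)))"
proof (rule exI[of _ "1/50"], intro conjI allI impI)
  show "(0::real) < 1/50"
    by simp
  fix n tau :: nat
  assume n: "n \<ge> 3" and tau: "tau \<ge> 1"
  obtain eps tt X Q where hard: "hard_instance n tau eps tt X Q"
    and Q: "real tau * real n ^ 2 \<le> 50 * real Q"
    using hard_instance_exists[OF n tau] by blast
  have "(\<exists>T. central_trajectory n X tt tau eps T) \<and>
      (\<forall>T. central_trajectory n X tt tau eps T \<longrightarrow> Q \<le> traj_complexity X tt tau T)"
    using hard_instance_central_trajectories[OF hard] n tau by simp
  moreover have "1/50 * real tau * real n ^ 2 \<le> real m" if "Q \<le> m" for m
    using Q that by simp
  ultimately show "\<exists>eps tt X. eps > 0 \<and> strictly_increasing_times tt tau \<and>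
      piecewise_linear_entities n X tt tau \<and> distinct_entities n X tt tau \<and>
      (\<exists>T. central_trajectory n X tt tau eps T) \<and>
      (\<forall>T. central_trajectory n X tt tau eps T \<longrightarrow>
        1/50 * real tau * real n ^ 2 \<le> real (traj_complexity X tt tau T))"
    using hard unfolding hard_instance_def by blast
qed

end
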